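(* Let $m\in\mathbb N$, $p(\cdot),p_1(\cdot),\dots,p_m(\cdot)\in LH\cap\mathcal P$ with $\frac1{p(\cdot)}=\sum_{i=1}^m\frac1{p_i(\cdot)}$, $\omega_i\in A_{p_i(\cdot)}$ ($i=1,\dots,m$), $v\in A_{p(\cdot)}$, and positive measurable $\varphi_{11},\dots,\varphi_{1m},\varphi_2$ on $\mathbb R^n\times(0,\infty)$ with $$\sup_{x\in\mathbb R^n,r>0}\varphi_2(x,r)^{-1}\int_r^\infty\frac{\operatorname*{ess\,inf}_{t<\eta<\infty}\prod_{i=1}^m\varphi_{1i}(x,\eta)\|\omega_i\|_{L^{p_i(\cdot)}(B(x,\eta))}}{\prod_{i=1}^m\|\omega_i\|_{L^{p_i(\cdot)}(B(x,t))}}\frac{dt}t<\infty.$$ Let $T$ be an $m$-sublinear operator with $T\in LS\big(\prod_iM^{p_i(\cdot),\varphi_{1i}}(\omega_i)\big)\cap LB\big(\prod_iM^{p_i(\cdot),\varphi_{1i}}(\omega_i)\to M^{p(\cdot),\varphi_2}(v)\big)$. Then $T$ is bounded from $M^{p_1(\cdot),\varphi_{11}}(\omega_1)\times\cdots\times M^{p_m(\cdot),\varphi_{1m}}(\omega_m)$ to $M^{p(\cdot),\varphi_2}(v)$.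
   Context: Variable exponents: $\mathcal P$ is the set of measurable $p:\mathbb R^n\to[1,\infty)$ with $1<\operatorname{ess\,inf}p\le\operatorname{ess\,sup}p<\infty$; $p'(\cdot)=p(\cdot)/(p(\cdot)-1)$. $\|f\|_{L^{p(\cdot)}(E)}=\inf\{\lambda>0:\int_E(|f|/\lambda)^{p(x)}dx\le1\}$. $LH$ is the class of globally log-Hölder continuous exponents: $|p(x)-p(y)|\le C/(-\log|x-y|)$ for $|x-y|\le1/2$ and $|p(x)-p(y)|\le C/\log(e+|x|)$ for $|y|\ge|x|$. For a weight $\omega$: $\|f\|_{L^{p(\cdot)}(E,\omega dx)}=\|\omega f\|_{L^{p(\cdot)}(E)}$; $\omega\in A_{p(\cdot)}$ means $\sup_B|B|^{-1}\|\omega\|_{L^{p(\cdot)}(B)}\|\omega^{-1}\|_{L^{p'(\cdot)}(B)}<\infty$. Generalized weighted variable exponent Morrey space: $\|f\|_{M^{p(\cdot),\varphi}(\omega)}=\sup_{x,r>0}\varphi(x,r)^{-1}\|\omega\|_{L^{p(\cdot)}(B(x,r))}^{-1}\|f\chi_{B(x,r)}\|_{L^{p(\cdot)}(\omega dx)}$. An $m$-sublinear operator is sublinear in each argument. For a ball $B$: $f_i^0=f_i\chi_{2B}$, $f_i^\infty=f_i\chi_{(2B)^c}$. $T\in LS(\prod_iX_i)$: there is $C$ such that for every ball $B$, $f_i\in X_i$, $(\alpha_1,\dots,\alpha_m)\in\{0,\infty\}^m$ not all $0$: $\|T(f_1^{\alpha_1},\dots,f_m^{\alpha_m})\|_{L^\infty(B)}\le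 C\sum_{j\ge1}\prod_i\frac1{|2^{j+1}B|}\int_{2^{j+1}B}|f_i|$. $T\in LB(\prod_iX_i\to Y)$: there is $C$ with $\|T(f_1^0,\dots,f_m^0)\|_Y\le C\prod_i\|f_i\|_{X_i}$ for every ball $B$ and $f_i\in X_i$. *)

theory Defs
  imports "HOL-Analysis.Analysis"
begin

text \<open>Space R^n is modelled by a type 'a of class euclidean_space; Lebesgue measure is lebesgue.
  Norms are valued in ennreal (infimum of the empty set is infinity).\<close>

definition var_modular :: "('a::euclidean_space \<Rightarrow> real) \<Rightarrow> 'a set \<Rightarrow> ('a \<Rightarrow> real) \<Rightarrow> ennreal" where
  "var_modular p E f = (\<integral>\<^sup>+ y. indicator E y * ennreal (\<bar>f y\<bar> powr p y) \<partial>lebesgue)"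

definition var_norm :: "('a::euclidean_space \<Rightarrow> real) \<Rightarrow> 'a set \<Rightarrow> ('a \<Rightarrow> real) \<Rightarrow> ennreal" where
  "var_norm p E f = Inf {ennreal l | l. 0 < l \<and> var_modular p E (\<lambda>y. f y / l) \<le> 1}"

definition conj_exp :: "('a \<Rightarrow> real) \<Rightarrow> 'a \<Rightarrow> real" where
  "conj_exp p = (\<lambda>x. p x / (p x - 1))"

definition exponent_P :: "('a::euclidean_space \<Rightarrow> real) \<Rightarrow> bool" where
  "exponent_P p \<longleftrightarrow> p \<in> borel_measurable lebesgue \<and> (\<forall>x. 1 \<le> p x) \<and>
     (\<exists>pm pM. 1 < pm \<and> (AE x in lebesgue. pm \<le> p x \<and> p x \<le> pM))"

definition exponent_LH :: "('a::euclidean_space \<Rightarrow> real) \<Rightarrow> bool" where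
  "exponent_LH p \<longleftrightarrow> (\<exists>C.
     (\<forall>x y. 0 < dist x y \<and> dist x y \<le> 1/2 \<longrightarrow> \<bar>p x - p y\<bar> \<le> C / (- ln (dist x y))) \<and>
     (\<forall>x y. norm x \<le> norm y \<longrightarrow> \<bar>p x - p y\<bar> \<le> C / ln (exp 1 + norm x)))"

definition weight :: "('a::euclidean_space \<Rightarrow> real) \<Rightarrow> bool" where
  "weight w \<longleftrightarrow> w \<in> borel_measurable lebesgue \<and> (\<forall>x. 0 < w x)"

definition A_weight :: "('a::euclidean_space \<Rightarrow> real) \<Rightarrow> ('a \<Rightarrow> real) \<Rightarrow> bool" where
  "A_weight p w \<longleftrightarrow> weight w \<and>
     (SUP z\<in>UNIV \<times> {0<..}. var_norm p (ball (fst z) (snd z)) w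
        * var_norm (conj_exp p) (ball (fst z) (snd z)) (\<lambda>y. 1 / w y)
        / emeasure lebesgue (ball (fst z) (snd z))) < \<infinity>"

definition morrey_norm :: "('a::euclidean_space \<Rightarrow> real) \<Rightarrow> ('a \<Rightarrow> real \<Rightarrow> real) \<Rightarrow> ('a \<Rightarrow> real)
    \<Rightarrow> ('a \<Rightarrow> real) \<Rightarrow> ennreal" where
  "morrey_norm p \<phi> w f = (SUP z\<in>UNIV \<times> {0<..}.
      var_norm p (ball (fst z) (snd z)) (\<lambda>y. w y * f y)
      / (ennreal (\<phi> (fst z) (snd z)) * var_norm p (ball (fst z) (snd z)) w))"

definition morrey_space :: "('a::euclidean_space \<Rightarrow> real) \<Rightarrow> ('a \<Rightarrow> real \<Rightarrow> real) \<Rightarrow> ('a \<Rightarrow> real)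
    \<Rightarrow> ('a \<Rightarrow> real) set" where
  "morrey_space p \<phi> w = {f. f \<in> borel_measurable lebesgue \<and> morrey_norm p \<phi> w f < \<infinity>}"

definition pos_meas_fun :: "('a::euclidean_space \<Rightarrow> real \<Rightarrow> real) \<Rightarrow> bool" where
  "pos_meas_fun \<phi> \<longleftrightarrow> (\<forall>x r. 0 < r \<longrightarrow> 0 < \<phi> x r) \<and>
     (\<lambda>z. \<phi> (fst z) (snd z)) \<in> borel_measurable (lebesgue_on (UNIV \<times> {0<..}))"

definition essinf_on :: "real set \<Rightarrow> (real \<Rightarrow> ennreal) \<Rightarrow> ennreal" where
  "essinf_on S g = Sup {c. AE t in lborel. t \<in> S \<longrightarrow> c \<le> g t}"

definition Linf_norm :: "'a::euclidean_space set \<Rightarrow> ('a \<Rightarrow> real) \<Rightarrow> ennreal" where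
  "Linf_norm B g = Inf {c. AE y in lebesgue. y \<in> B \<longrightarrow> ennreal \<bar>g y\<bar> \<le> c}"

text \<open>Operators act on lists of m functions. X i is the i-th space (i < m).\<close>
definition in_prod :: "nat \<Rightarrow> (nat \<Rightarrow> ('a \<Rightarrow> real) set) \<Rightarrow> ('a \<Rightarrow> real) list \<Rightarrow> bool" where
  "in_prod m X fs \<longleftrightarrow> length fs = m \<and> (\<forall>i<m. fs ! i \<in> X i)"

definition m_sublinear :: "nat \<Rightarrow> (nat \<Rightarrow> ('a \<Rightarrow> real) set) \<Rightarrow> (('a \<Rightarrow> real) list \<Rightarrow> 'a \<Rightarrow> real) \<Rightarrow> bool" where
  "m_sublinear m X T \<longleftrightarrow> (\<forall>fs i g h c x. in_prod m X fs \<and> i < m \<and> g \<in> X i \<and> h \<in> X i \<longrightarrow>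
      \<bar>T (fs[i := (\<lambda>y. g y + h y)]) x\<bar> \<le> \<bar>T (fs[i := g]) x\<bar> + \<bar>T (fs[i := h]) x\<bar> \<and>
      \<bar>T (fs[i := (\<lambda>y. c * g y)]) x\<bar> = \<bar>c\<bar> * \<bar>T (fs[i := g]) x\<bar>)"

text \<open>f^alpha for the ball B(x,r): index i gets f_i chi_{(2B)^c} if i in S (alpha_i = oo),
  and f_i chi_{2B} otherwise (alpha_i = 0).\<close>
definition trunc_list :: "nat \<Rightarrow> nat set \<Rightarrow> 'a::euclidean_space \<Rightarrow> real \<Rightarrow> ('a \<Rightarrow> real) list \<Rightarrow> ('a \<Rightarrow> real) list" where
  "trunc_list m S x r fs = map (\<lambda>i. (\<lambda>y. (if i \<in> S then indicator (- ball x (2 * r)) y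
        else indicator (ball x (2 * r)) y) * (fs ! i) y)) [0..<m]"

definition LS_class :: "nat \<Rightarrow> (nat \<Rightarrow> ('a::euclidean_space \<Rightarrow> real) set) \<Rightarrow> (('a \<Rightarrow> real) list \<Rightarrow> 'a \<Rightarrow> real) \<Rightarrow> bool" where
  "LS_class m X T \<longleftrightarrow> (\<exists>C::real. \<forall>x r fs S. 0 < r \<and> in_prod m X fs \<and> S \<subseteq> {..<m} \<and> S \<noteq> {} \<longrightarrow>
      Linf_norm (ball x r) (T (trunc_list m S x r fs)) \<le>
        ennreal C * (\<Sum>j. \<Prod>i<m. (\<integral>\<^sup>+ y. indicator (ball x (2 ^ (j + 2) * r)) y * ennreal \<bar>(fs ! i) y\<bar> \<partial>lebesgue)
                                 / emeasure lebesgue (ball x (2 ^ (j + 2) * r))))"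

definition LB_class :: "nat \<Rightarrow> (nat \<Rightarrow> ('a::euclidean_space \<Rightarrow> real) set) \<Rightarrow> (nat \<Rightarrow> ('a \<Rightarrow> real) \<Rightarrow> ennreal)
    \<Rightarrow> (('a \<Rightarrow> real) \<Rightarrow> ennreal) \<Rightarrow> (('a \<Rightarrow> real) list \<Rightarrow> 'a \<Rightarrow> real) \<Rightarrow> bool" where
  "LB_class m X Xnorm Ynorm T \<longleftrightarrow> (\<exists>C::real. \<forall>x r fs. 0 < r \<and> in_prod m X fs \<longrightarrow>
      Ynorm (T (trunc_list m {} x r fs)) \<le> ennreal C * (\<Prod>i<m. Xnorm i (fs ! i)))"

end

theory Submission
  imports Defs
begin

text \<open>Fix a ball B = B(x,r) and split each f_i at 2B. By sublinearity, |T f| is at most the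
  local term |T(f_1 chi_2B, ..., f_m chi_2B)|, which LB controls, plus finitely many terms having
  some argument supported off 2B. On B, LS bounds each of these by a sum over j of products of
  averages of |f_i| over 2^(j+2) B. By Hoelder's inequality and the A_p condition, the average over
  a ball of radius R is at most a constant times ||w_i f_i|| / ||w_i|| in L^p_i(B(x,t)) for every
  t in (R, 2R); the numerator increases with the radius and is bounded by the Morrey norm of f_i
  times phi_1i(x,eta) ||w_i||_(L^p_i(B(x,eta))) for every eta > t. Hence the dyadic sum is dominated
  by the integral in the hypothesis, which is at most a constant times phi_2(x,r). Finally, a.e.
  |h| <= |g| + L on B gives ||v h|| <= 4 (||v g|| + L ||v||) in L^p(B).\<close>

lemma ennreal_le_mult_of_divide_le:
  fixes a b c :: ennreal
  assumes "b \<noteq> 0" "b \<noteq> top" "a / b \<le> c"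
  shows "a \<le> c * b"
proof -
  have "a = (a / b) * b" using assms
    by (simp add: ennreal_divide_times less_top)
  also have "\<dots> \<le> c * b" using assms(3) by (intro mult_right_mono) auto
  finally show ?thesis .
qed

lemma ennreal_le_divide_of_mult_le:
  fixes a b c :: ennreal
  assumes "b \<noteq> 0" "b \<noteq> top" "a * b \<le> c"
  shows "a \<le> c / b"
proof -
  have "a = (a * b) / b" using assms by (simp add: ennreal_mult_divide_eq)
  also have "\<dots> \<le> c / b" using assms(3) by (intro divide_right_mono_ennreal)
  finally show ?thesis .
qed

lemma ennreal_divide_real: "0 < t \<Longrightarrow> a / ennreal t = a * ennreal (1 / t)"
  by (simp add: divide_ennreal_def inverse_ennreal inverse_eq_divide)

lemma prod_less_top_ennreal:
  assumes "\<And>i. i \<in> A \<Longrightarrow> f i < (top::ennreal)"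
  shows "(\<Prod>i\<in>A. f i) < top"
  using assms by (induction A rule: infinite_finite_induct) (auto simp: ennreal_mult_less_top)

text \<open>Unlike \<open>nn_integral_add\<close>, only one summand needs to be measurable.\<close>

lemma nn_integral_add_le:
  assumes [measurable]: "G \<in> borel_measurable M"
  shows "(\<integral>\<^sup>+x. F x + G x \<partial>M) \<le> (\<integral>\<^sup>+x. F x \<partial>M) + (\<integral>\<^sup>+x. G x \<partial>M)"
proof -
  have "(\<integral>\<^sup>+x. F x + G x \<partial>M) = (SUP s \<in> {s. simple_function M s \<and> s \<le> (\<lambda>x. F x + G x) \<and> (\<forall>x. s x < top)}. integral\<^sup>S M s)"
    by (rule nn_integral_def_finite)
  also have "\<dots> \<le> (\<integral>\<^sup>+x. F x \<partial>M) + (\<integral>\<^sup>+x. G x \<partial>M)"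
  proof (rule SUP_least)
    fix s assume s: "s \<in> {s. simple_function M s \<and> s \<le> (\<lambda>x. F x + G x) \<and> (\<forall>x. s x < top)}"
    then have [measurable]: "s \<in> borel_measurable M" by (auto intro: borel_measurable_simple_function)
    have "integral\<^sup>S M s = integral\<^sup>N M s" using s by (simp add: nn_integral_eq_simple_integral)
    also have "\<dots> \<le> (\<integral>\<^sup>+x. (s x - G x) + G x \<partial>M)"
      by (intro nn_integral_mono) (auto simp add: diff_add_self_ennreal)
    also have "\<dots> = (\<integral>\<^sup>+x. s x - G x \<partial>M) + (\<integral>\<^sup>+x. G x \<partial>M)"
      by (rule nn_integral_add) auto
    also have "(\<integral>\<^sup>+x. s x - G x \<partial>M) \<le> (\<integral>\<^sup>+x. F x \<partial>M)"
    proof (intro nn_integral_mono)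
      fix x have "s x \<le> F x + G x" "s x < top" using s by (auto simp: le_fun_def)
      then show "s x - G x \<le> F x" by (auto simp: ennreal_minus_le_iff add.commute)
    qed
    finally show "integral\<^sup>S M s \<le> (\<integral>\<^sup>+x. F x \<partial>M) + (\<integral>\<^sup>+x. G x \<partial>M)" by (simp add: add_right_mono)
  qed
  finally show ?thesis .
qed

text \<open>Unlike \<open>nn_integral_cmult\<close>, \<open>F\<close> need not be measurable.\<close>

lemma nn_integral_cmult_le:
  assumes "c < top"
  shows "(\<integral>\<^sup>+x. c * F x \<partial>M) \<le> c * (\<integral>\<^sup>+x. F x \<partial>M)"
proof (cases "c = 0")
  case True then show ?thesis by simp
next
  case False
  have "(\<integral>\<^sup>+x. c * F x \<partial>M) = (SUP s \<in> {s. simple_function M s \<and> s \<le> (\<lambda>x. c * F x)}. integral\<^sup>S M s)"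
    by (simp add: nn_integral_def)
  also have "\<dots> \<le> c * (\<integral>\<^sup>+x. F x \<partial>M)"
  proof (rule SUP_least)
    fix s assume s: "s \<in> {s. simple_function M s \<and> s \<le> (\<lambda>x. c * F x)}"
    then have [measurable]: "s \<in> borel_measurable M" by (auto intro: borel_measurable_simple_function)
    have eq: "\<And>x. c * (s x / c) = s x" using False assms
      by (simp add: ennreal_times_divide mult.commute[of c] ennreal_mult_divide_eq)
    have "integral\<^sup>S M s = integral\<^sup>N M s" using s by (simp add: nn_integral_eq_simple_integral)
    also have "\<dots> = (\<integral>\<^sup>+x. c * (s x / c) \<partial>M)" by (simp add: eq)
    also have "\<dots> = c * (\<integral>\<^sup>+x. s x / c \<partial>M)" by (rule nn_integral_cmult) auto
    also have "(\<integral>\<^sup>+x. s x / c \<partial>M) \<le> (\<integral>\<^sup>+x. F x \<partial>M)"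
    proof (intro nn_integral_mono)
      fix x have "s x \<le> c * F x" using s by (auto simp: le_fun_def)
      then show "s x / c \<le> F x" using False by (intro divide_le_posI_ennreal) (auto simp: zero_less_iff_neq_zero)
    qed
    finally show "integral\<^sup>S M s \<le> c * (\<integral>\<^sup>+x. F x \<partial>M)" by (simp add: mult_left_mono)
  qed
  finally show ?thesis .
qed

lemma emeasure_lebesgue_ball_pos_finite:
  fixes x :: "'a::euclidean_space"
  assumes "0 < r"
  shows "0 < emeasure lebesgue (ball x r)" "emeasure lebesgue (ball x r) < top"
proof -
  have e: "emeasure lebesgue (ball x r) = emeasure lborel (ball x r)"
    by simp
  show "emeasure lebesgue (ball x r) < top" using e emeasure_lborel_ball_finite by simp
  have "emeasure lborel (ball x r) = ennreal (measure lborel (ball x r))"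
    by (intro emeasure_eq_ennreal_measure) (use emeasure_lborel_ball_finite[of x r] in auto)
  then show "0 < emeasure lebesgue (ball x r)" using e content_ball_pos[OF assms, of x] by simp
qed

lemma emeasure_lebesgue_ball_doubling:
  fixes x :: "'a::euclidean_space"
  assumes "0 < R" "R \<le> t" "t \<le> 2 * R"
  shows "emeasure lebesgue (ball x t) \<le> ennreal (2 ^ DIM('a)) * emeasure lebesgue (ball x R)"
proof -
  have "emeasure lebesgue (ball x t) = ennreal (t ^ DIM('a)) * emeasure lebesgue (ball (0::'a) 1)"
    using assms by (intro emeasure_lebesgue_ball_conv_unit_ball) auto
  also have "\<dots> \<le> ennreal ((2 * R) ^ DIM('a)) * emeasure lebesgue (ball (0::'a) 1)"
    using assms by (intro mult_right_mono ennreal_leI power_mono) auto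
  also have "ennreal ((2 * R) ^ DIM('a)) = ennreal (2 ^ DIM('a)) * ennreal (R ^ DIM('a))"
    using assms by (simp add: power_mult_distrib ennreal_mult)
  also have "ennreal (2 ^ DIM('a)) * ennreal (R ^ DIM('a)) * emeasure lebesgue (ball (0::'a) 1)
      = ennreal (2 ^ DIM('a)) * emeasure lebesgue (ball x R)"
    using assms by (subst emeasure_lebesgue_ball_conv_unit_ball[of R x]) (auto simp: mult.assoc)
  finally show ?thesis .
qed

lemma AE_le_Linf_norm:
  assumes "B \<in> sets lebesgue"
  shows "AE y in lebesgue. y \<in> B \<longrightarrow> ennreal \<bar>g y\<bar> \<le> Linf_norm B g"
proof (cases "Linf_norm B g = top")
  case True then show ?thesis by simp
next
  case False
  let ?L = "Linf_norm B g"
  have "\<forall>n::nat. AE y in lebesgue. y \<in> B \<longrightarrow> ennreal \<bar>g y\<bar> \<le> ?L + ennreal (1 / Suc n)"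
  proof
    fix n :: nat
    have "?L < ?L + ennreal (1 / Suc n)" using False by (simp add: ennreal_add_left_cancel_less less_top)
    then obtain c where c: "AE y in lebesgue. y \<in> B \<longrightarrow> ennreal \<bar>g y\<bar> \<le> c" "c < ?L + ennreal (1 / Suc n)"
      unfolding Linf_norm_def by (auto simp: Inf_less_iff)
    then show "AE y in lebesgue. y \<in> B \<longrightarrow> ennreal \<bar>g y\<bar> \<le> ?L + ennreal (1 / Suc n)"
      by (auto elim!: eventually_mono)
  qed
  then have "AE y in lebesgue. \<forall>n::nat. y \<in> B \<longrightarrow> ennreal \<bar>g y\<bar> \<le> ?L + ennreal (1 / Suc n)"
    by (rule AE_all_countable[THEN iffD2])
  then show ?thesis
  proof (eventually_elim, intro impI)
    case (elim y)
    assume "y \<in> B"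
    show "ennreal \<bar>g y\<bar> \<le> ?L"
    proof (rule ennreal_le_epsilon)
      fix e :: real assume "0 < e"
      then obtain n where n: "inverse (real (Suc n)) < e" using reals_Archimedean by blast
      have "ennreal \<bar>g y\<bar> \<le> ?L + ennreal (1 / Suc n)" using elim \<open>y \<in> B\<close> by blast
      also have "\<dots> \<le> ?L + ennreal e" using n by (intro add_left_mono ennreal_leI) (simp add: inverse_eq_divide)
      finally show "ennreal \<bar>g y\<bar> \<le> ?L + ennreal e" .
    qed
  qed
qed

lemma le_mult_essinf_on:
  assumes "\<forall>\<eta>\<in>S. c \<le> P * g \<eta>" "P < top" "S \<noteq> {}"
  shows "c \<le> P * essinf_on S g"
proof (cases "P = 0")
  case True then show ?thesis using assms by auto
next
  case False
  have "c / P \<le> g \<eta>" if "\<eta> \<in> S" for \<eta>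
    using assms that False by (intro divide_le_posI_ennreal) (auto simp: zero_less_iff_neq_zero)
  then have "c / P \<le> essinf_on S g" unfolding essinf_on_def by (intro Sup_upper) auto
  then have "P * (c / P) \<le> P * essinf_on S g" by (rule mult_left_mono) simp
  moreover have "P * (c / P) = c" using False assms(2)
    by (simp add: ennreal_times_divide mult.commute[of P] ennreal_mult_divide_eq)
  ultimately show ?thesis by simp
qed

lemma young_ineq_crude:
  fixes a b p :: real
  assumes "0 \<le> a" "0 \<le> b" "1 < p"
  shows "a * b \<le> a powr p + b powr (p / (p - 1))"
proof (cases "b = 0")
  case True then show ?thesis using assms by simp
next
  case False
  then have b: "0 < b" using assms by simp
  show ?thesis
  proof (cases "a \<le> b powr (1 / (p - 1))")
    case True
    have "a * b \<le> b powr (1 / (p - 1)) * b" using True b by (intro mult_right_mono) auto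
    also have "\<dots> = b powr (1 / (p - 1) + 1)" using b by (simp add: powr_add)
    also have "1 / (p - 1) + 1 = p / (p - 1)" using assms by (simp add: field_simps)
    finally show ?thesis using powr_ge_zero[of a p] by linarith
  next
    case False
    then have a: "0 < a" using b powr_ge_zero[of b "1 / (p - 1)"] by linarith
    have "b = (b powr (1 / (p - 1))) powr (p - 1)" using b assms by (simp add: powr_powr)
    also have "\<dots> \<le> a powr (p - 1)" using False assms by (intro powr_mono2) auto
    finally have "a * b \<le> a * a powr (p - 1)" using a by simp
    also have "\<dots> = a powr p" using powr_add[of a 1 "p - 1"] a by simp
    finally show ?thesis using powr_ge_zero[of b "p / (p - 1)"] by linarith
  qed
qed

lemma powr_le_half_sum_of_le_quarter:
  fixes x a b p :: real
  assumes "0 \<le> x" "0 \<le> a" "0 \<le> b" "x \<le> (a + b) / 4" "1 \<le> p"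
  shows "x powr p \<le> a powr p / 2 + b powr p / 2"
proof -
  let ?M = "max a b"
  have "x \<le> ?M / 2" using assms by (auto simp: max_def)
  then have "x powr p \<le> (?M / 2) powr p" using assms by (intro powr_mono2) auto
  also have "\<dots> = ?M powr p / 2 powr p" using assms by (simp add: powr_divide)
  also have "\<dots> \<le> ?M powr p / 2"
  proof -
    have "2 powr 1 \<le> 2 powr p" using assms by (intro powr_mono) auto
    then show ?thesis by (intro divide_left_mono) auto
  qed
  also have "\<dots> \<le> a powr p / 2 + b powr p / 2" by (auto simp: max_def)
  finally show ?thesis .
qed

lemma perturbed_product_le:
  fixes n1 n2 e :: real
  assumes "0 \<le> n1" "0 \<le> n2" "0 < e"
  obtains d where "0 < d" "2 * (n1 + d) * (n2 + d) \<le> 2 * n1 * n2 + e"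
proof
  define d where "d = min 1 (e / (2 * (n1 + n2 + 1)))"
  show d0: "0 < d" using assms by (auto simp: d_def)
  have "d \<le> 1" by (simp add: d_def)
  with d0 have "d * d \<le> d" by (simp add: mult_left_le_one_le)
  have "d \<le> e / (2 * (n1 + n2 + 1))" by (simp add: d_def)
  moreover have pos: "0 < 2 * (n1 + n2 + 1)" using assms by simp
  ultimately have "d * (2 * (n1 + n2 + 1)) \<le> e" using pos_le_divide_eq[OF pos] by blast
  have "2 * (n1 + d) * (n2 + d) = 2 * n1 * n2 + 2 * d * (n1 + n2) + 2 * (d * d)" by (simp add: algebra_simps)
  also have "\<dots> \<le> 2 * n1 * n2 + d * (2 * (n1 + n2 + 1))" using \<open>d * d \<le> d\<close> by (simp add: algebra_simps)
  also have "\<dots> \<le> 2 * n1 * n2 + e" using \<open>d * (2 * (n1 + n2 + 1)) \<le> e\<close> by simp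
  finally show "2 * (n1 + d) * (n2 + d) \<le> 2 * n1 * n2 + e" .
qed

lemma var_norm_le_ennreal:
  assumes "0 < l" "var_modular p E (\<lambda>y. f y / l) \<le> 1"
  shows "var_norm p E f \<le> ennreal l"
  unfolding var_norm_def using assms by (intro Inf_lower) auto

lemma var_modular_mono:
  assumes "\<forall>y. 0 \<le> p y" "AE y in lebesgue. y \<in> E \<longrightarrow> \<bar>f y\<bar> \<le> \<bar>g y\<bar>"
  shows "var_modular p E f \<le> var_modular p E g"
  unfolding var_modular_def
  using assms(2) by (intro nn_integral_mono_AE) (auto elim!: eventually_mono
      intro!: mult_left_mono ennreal_leI powr_mono2 assms(1)[rule_format] split: split_indicator)

lemma var_modular_le_1_of_var_norm_less:
  assumes "var_norm p E f < ennreal l" "0 < l" "\<forall>y. 0 \<le> p y"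
  shows "var_modular p E (\<lambda>y. f y / l) \<le> 1"
proof -
  from assms(1) obtain l' where l': "0 < l'" "var_modular p E (\<lambda>y. f y / l') \<le> 1" "ennreal l' < ennreal l"
    unfolding var_norm_def by (auto simp: Inf_less_iff)
  then have "l' < l" using assms(2) by (simp add: ennreal_less_iff)
  have "var_modular p E (\<lambda>y. f y / l) \<le> var_modular p E (\<lambda>y. f y / l')"
    using assms(3) l' \<open>l' < l\<close> by (intro var_modular_mono) (auto simp: abs_divide intro!: divide_left_mono)
  with l' show ?thesis by simp
qed

lemma var_norm_le_intro:
  assumes "\<And>l. 0 < l \<Longrightarrow> a < ennreal l \<Longrightarrow> var_modular p E (\<lambda>y. f y / l) \<le> 1"
  shows "var_norm p E f \<le> a"
proof (rule ennreal_le_epsilon)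
  fix e :: real assume "a < top" "0 < e"
  then obtain a' where a': "a = ennreal a'" "0 \<le> a'" by (cases a) auto
  have "var_norm p E f \<le> ennreal (a' + e)"
    using \<open>0 < e\<close> a' by (intro var_norm_le_ennreal assms) (auto simp: ennreal_less_iff)
  then show "var_norm p E f \<le> a + ennreal e" using a' \<open>0 < e\<close> by (simp add: ennreal_plus)
qed

lemma var_norm_mono:
  assumes "\<forall>y. 0 \<le> p y" "AE y in lebesgue. y \<in> E \<longrightarrow> \<bar>f y\<bar> \<le> \<bar>g y\<bar>"
  shows "var_norm p E f \<le> var_norm p E g"
proof (rule var_norm_le_intro)
  fix l :: real assume l: "0 < l" "var_norm p E g < ennreal l"
  have "var_modular p E (\<lambda>y. f y / l) \<le> var_modular p E (\<lambda>y. g y / l)"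
    using assms(2) l by (intro var_modular_mono[OF assms(1)])
      (auto elim!: eventually_mono simp: abs_divide divide_right_mono)
  also have "\<dots> \<le> 1" using var_modular_le_1_of_var_norm_less[OF l(2) l(1) assms(1)] .
  finally show "var_modular p E (\<lambda>y. f y / l) \<le> 1" .
qed

lemma var_norm_mono_set:
  assumes "E \<subseteq> F"
  shows "var_norm p E f \<le> var_norm p F f"
  unfolding var_norm_def
proof (intro Inf_superset_mono, safe)
  fix l assume "0 < l" "var_modular p F (\<lambda>y. f y / l) \<le> 1"
  moreover have "var_modular p E (\<lambda>y. f y / l) \<le> var_modular p F (\<lambda>y. f y / l)"
    unfolding var_modular_def using assms by (intro nn_integral_mono) (auto split: split_indicator)
  ultimately show "\<exists>l'. ennreal l = ennreal l' \<and> 0 < l' \<and> var_modular p E (\<lambda>y. f y / l') \<le> 1"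
    by force
qed

lemma var_norm_cmult_le:
  assumes "0 \<le> c" "\<forall>y. 0 \<le> p y"
  shows "var_norm p E (\<lambda>y. c * f y) \<le> ennreal c * var_norm p E f"
proof (rule var_norm_le_intro)
  fix l :: real assume l: "0 < l" "ennreal c * var_norm p E f < ennreal l"
  show "var_modular p E (\<lambda>y. c * f y / l) \<le> 1"
  proof (cases "c = 0")
    case True then show ?thesis by (simp add: var_modular_def)
  next
    case False
    then have c: "0 < c" using assms by auto
    have "var_norm p E f \<noteq> top" using l c by (auto simp: ennreal_mult_top)
    then obtain n where n: "var_norm p E f = ennreal n" "0 \<le> n" by (cases "var_norm p E f") auto
    have "c * n < l" using l n c by (simp add: ennreal_mult'[symmetric] ennreal_less_iff)
    then have "var_norm p E f < ennreal (l / c)" using n c by (simp add: ennreal_less_iff field_simps)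
    from var_modular_le_1_of_var_norm_less[OF this _ assms(2)] c l
    have "var_modular p E (\<lambda>y. f y / (l / c)) \<le> 1" by simp
    moreover have "(\<lambda>y. f y / (l / c)) = (\<lambda>y. c * f y / l)" using c by (auto simp: field_simps)
    ultimately show ?thesis by simp
  qed
qed

lemma var_modular_le_1_of_le_quarter_sum:
  assumes [measurable]: "p \<in> borel_measurable lebesgue" "E \<in> sets lebesgue" "u \<in> borel_measurable lebesgue"
    and p1: "\<forall>y. 1 \<le> p y"
    and g: "var_modular p E g \<le> 1" and u: "var_modular p E u \<le> 1"
    and h: "AE y in lebesgue. y \<in> E \<longrightarrow> \<bar>h y\<bar> \<le> (\<bar>g y\<bar> + \<bar>u y\<bar>) / 4"
  shows "var_modular p E h \<le> 1"
proof -
  let ?half = "ennreal (1 / 2)"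
  have "AE y in lebesgue. indicator E y * ennreal (\<bar>h y\<bar> powr p y) \<le>
      ?half * (indicator E y * ennreal (\<bar>g y\<bar> powr p y)) + ?half * (indicator E y * ennreal (\<bar>u y\<bar> powr p y))"
    using h
  proof eventually_elim
    case (elim y)
    show ?case
    proof (cases "y \<in> E")
      case True
      then have "\<bar>h y\<bar> powr p y \<le> \<bar>g y\<bar> powr p y / 2 + \<bar>u y\<bar> powr p y / 2"
        using elim p1 by (intro powr_le_half_sum_of_le_quarter) auto
      then have "ennreal (\<bar>h y\<bar> powr p y) \<le> ennreal (1 / 2 * \<bar>g y\<bar> powr p y) + ennreal (1 / 2 * \<bar>u y\<bar> powr p y)"
        by (simp add: ennreal_plus[symmetric] del: ennreal_plus)
      also have "\<dots> = ?half * ennreal (\<bar>g y\<bar> powr p y) + ?half * ennreal (\<bar>u y\<bar> powr p y)"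
        by (simp only: ennreal_mult powr_ge_zero)
      finally show ?thesis using True by simp
    qed simp
  qed
  then have "var_modular p E h \<le>
      (\<integral>\<^sup>+y. ?half * (indicator E y * ennreal (\<bar>g y\<bar> powr p y)) + ?half * (indicator E y * ennreal (\<bar>u y\<bar> powr p y)) \<partial>lebesgue)"
    unfolding var_modular_def by (rule nn_integral_mono_AE)
  also have "\<dots> \<le> (\<integral>\<^sup>+y. ?half * (indicator E y * ennreal (\<bar>g y\<bar> powr p y)) \<partial>lebesgue) +
      (\<integral>\<^sup>+y. ?half * (indicator E y * ennreal (\<bar>u y\<bar> powr p y)) \<partial>lebesgue)"
    by (rule nn_integral_add_le) measurable
  also have "\<dots> \<le> ?half * var_modular p E g + ?half * var_modular p E u"
    unfolding var_modular_def by (intro add_mono nn_integral_cmult_le ennreal_less_top)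
  also have "\<dots> \<le> ?half * 1 + ?half * 1"
    using g u by (intro add_mono mult_left_mono) auto
  also have "\<dots> = 1" using ennreal_plus[of "1/2" "1/2"] by simp
  finally show ?thesis .
qed

lemma var_norm_le_add_const:
  assumes [measurable]: "p \<in> borel_measurable lebesgue" "E \<in> sets lebesgue" "v \<in> borel_measurable lebesgue"
    and p1: "\<forall>y. 1 \<le> p y" and L: "0 \<le> L"
    and h: "AE y in lebesgue. y \<in> E \<longrightarrow> \<bar>h y\<bar> \<le> \<bar>g y\<bar> + L * \<bar>v y\<bar>"
  shows "var_norm p E h \<le> 4 * (var_norm p E g + ennreal L * var_norm p E v)"
proof (rule var_norm_le_intro)
  fix l :: real assume l: "0 < l" "4 * (var_norm p E g + ennreal L * var_norm p E v) < ennreal l"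
  have p0: "\<forall>y. 0 \<le> p y" using p1 by (auto intro: order_trans[OF zero_le_one])
  have "4 * (var_norm p E g + ennreal L * var_norm p E v) < top"
    using l(2) by (rule order.strict_trans) simp
  then have "var_norm p E g < top" "ennreal L * var_norm p E v < top"
    by (auto simp: ennreal_mult_less_top)
  then obtain a b where ab: "var_norm p E g = ennreal a" "ennreal L * var_norm p E v = ennreal b" "0 \<le> a" "0 \<le> b"
    unfolding less_top_ennreal by auto
  have "ennreal (4 * (a + b)) = 4 * (ennreal a + ennreal b)" using ab by (simp add: ennreal_mult ennreal_plus)
  then have "ennreal (4 * (a + b)) < ennreal l" using l(2) ab by simp
  then have "4 * (a + b) < l" using ab by (subst (asm) ennreal_less_iff) auto
  then have a: "a < l / 4" and b: "b < l / 4" using ab by auto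
  have g: "var_modular p E (\<lambda>y. g y / (l / 4)) \<le> 1"
    using a ab l by (intro var_modular_le_1_of_var_norm_less[OF _ _ p0]) (simp_all add: ennreal_less_iff)
  have "var_norm p E (\<lambda>y. L * v y) \<le> ennreal b"
    using var_norm_cmult_le[OF L p0, of E v] ab by simp
  also have "ennreal b < ennreal (l / 4)" using b ab by (simp add: ennreal_less_iff)
  finally have v: "var_modular p E (\<lambda>y. L * v y / (l / 4)) \<le> 1"
    using l by (intro var_modular_le_1_of_var_norm_less[OF _ _ p0]) auto
  have hgv: "AE y in lebesgue. y \<in> E \<longrightarrow> \<bar>h y / l\<bar> \<le> (\<bar>g y / (l / 4)\<bar> + \<bar>L * v y / (l / 4)\<bar>) / 4"
    using h
  proof eventually_elim
    case (elim y)
    have eq: "(\<bar>g y / (l / 4)\<bar> + \<bar>L * v y / (l / 4)\<bar>) / 4 = (\<bar>g y\<bar> + L * \<bar>v y\<bar>) / l"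
      using l L by (simp add: abs_mult add_divide_distrib)
    show ?case unfolding eq using elim l by (auto simp: abs_divide intro!: divide_right_mono)
  qed
  show "var_modular p E (\<lambda>y. h y / l) \<le> 1"
    by (rule var_modular_le_1_of_le_quarter_sum[OF _ _ _ p1 g v hgv]) measurable
qed

lemma exponent_PD:
  assumes "exponent_P p"
  shows "p \<in> borel_measurable lebesgue" "\<forall>y. 1 \<le> p y" "AE y in lebesgue. 1 < p y" "\<forall>y. 0 \<le> p y"
proof -
  show "p \<in> borel_measurable lebesgue" "\<forall>y. 1 \<le> p y" using assms by (auto simp: exponent_P_def)
  then show "\<forall>y. 0 \<le> p y" by (auto intro: order_trans[OF zero_le_one])
  from assms obtain pm pM where "1 < pm" "AE x in lebesgue. pm \<le> p x \<and> p x \<le> pM"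
    by (auto simp: exponent_P_def)
  then show "AE y in lebesgue. 1 < p y" by (auto elim!: eventually_mono)
qed

lemma conj_exp_nonneg: "\<forall>y. 1 \<le> p y \<Longrightarrow> \<forall>y. 0 \<le> conj_exp p y"
  unfolding conj_exp_def by (metis diff_ge_0_iff_ge divide_nonneg_nonneg order.trans zero_le_one)

lemma exponent_P_conj_exp:
  assumes "exponent_P p"
  shows "conj_exp p \<in> borel_measurable lebesgue" "\<forall>y. 0 \<le> conj_exp p y" "AE y in lebesgue. 1 \<le> conj_exp p y"
proof -
  note e = exponent_PD[OF assms]
  have [measurable]: "p \<in> borel_measurable lebesgue" by (fact e(1))
  show "conj_exp p \<in> borel_measurable lebesgue" unfolding conj_exp_def by measurable
  show "\<forall>y. 0 \<le> conj_exp p y" by (rule conj_exp_nonneg[OF e(2)])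
  show "AE y in lebesgue. 1 \<le> conj_exp p y" using e(3)
    by (auto elim!: eventually_mono simp: conj_exp_def field_simps)
qed

lemma nn_integral_mult_le_of_var_modular:
  assumes [measurable]: "p \<in> borel_measurable lebesgue" "E \<in> sets lebesgue"
    "f \<in> borel_measurable lebesgue" "g \<in> borel_measurable lebesgue"
    and pae: "AE y in lebesgue. 1 < p y" and l: "0 < l1" "0 < l2"
    and f: "var_modular p E (\<lambda>y. f y / l1) \<le> 1" and g: "var_modular (conj_exp p) E (\<lambda>y. g y / l2) \<le> 1"
  shows "(\<integral>\<^sup>+y. indicator E y * ennreal \<bar>f y * g y\<bar> \<partial>lebesgue) \<le> ennreal (2 * l1 * l2)"
proof -
  have [measurable]: "conj_exp p \<in> borel_measurable lebesgue" unfolding conj_exp_def by measurable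
  let ?u = "\<lambda>y. \<bar>f y / l1 * (g y / l2)\<bar>"
  have "(\<integral>\<^sup>+y. indicator E y * ennreal \<bar>f y * g y\<bar> \<partial>lebesgue)
      = (\<integral>\<^sup>+y. ennreal (l1 * l2) * (indicator E y * ennreal (?u y)) \<partial>lebesgue)"
    using l by (intro nn_integral_cong) (simp add: abs_mult abs_divide ennreal_mult[symmetric] mult_ac)
  also have "\<dots> = ennreal (l1 * l2) * (\<integral>\<^sup>+y. indicator E y * ennreal (?u y) \<partial>lebesgue)"
    by (rule nn_integral_cmult) measurable
  also have "(\<integral>\<^sup>+y. indicator E y * ennreal (?u y) \<partial>lebesgue) \<le>
      (\<integral>\<^sup>+y. indicator E y * ennreal (\<bar>f y / l1\<bar> powr p y) + indicator E y * ennreal (\<bar>g y / l2\<bar> powr conj_exp p y) \<partial>lebesgue)"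
    using pae
  proof (intro nn_integral_mono_AE, eventually_elim)
    case (elim y)
    have "?u y \<le> \<bar>f y / l1\<bar> powr p y + \<bar>g y / l2\<bar> powr conj_exp p y"
      using young_ineq_crude[of "\<bar>f y / l1\<bar>" "\<bar>g y / l2\<bar>" "p y"] elim by (simp add: abs_mult conj_exp_def)
    then have "ennreal (?u y) \<le> ennreal (\<bar>f y / l1\<bar> powr p y) + ennreal (\<bar>g y / l2\<bar> powr conj_exp p y)"
      by (simp add: ennreal_plus[symmetric] del: ennreal_plus)
    then show ?case by (auto split: split_indicator)
  qed
  also have "\<dots> = var_modular p E (\<lambda>y. f y / l1) + var_modular (conj_exp p) E (\<lambda>y. g y / l2)"
    unfolding var_modular_def by (rule nn_integral_add) measurable
  also have "\<dots> \<le> 2" using f g by (metis add_mono one_add_one)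
  also have "ennreal (l1 * l2) * 2 = ennreal (2 * l1 * l2)"
    using l by (simp add: ennreal_mult mult_ac)
  finally show ?thesis by (simp add: mult_left_mono)
qed

lemma var_norm_Hoelder:
  assumes [measurable]: "p \<in> borel_measurable lebesgue" "E \<in> sets lebesgue"
    "f \<in> borel_measurable lebesgue" "g \<in> borel_measurable lebesgue"
    and p1: "\<forall>y. 1 \<le> p y" and pae: "AE y in lebesgue. 1 < p y"
    and nf: "var_norm p E f < top" and ng: "var_norm (conj_exp p) E g < top"
  shows "(\<integral>\<^sup>+y. indicator E y * ennreal \<bar>f y * g y\<bar> \<partial>lebesgue) \<le> 2 * var_norm p E f * var_norm (conj_exp p) E g"
proof -
  have p0: "\<forall>y. 0 \<le> p y" using p1 by (auto intro: order_trans[OF zero_le_one])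
  obtain n1 where n1: "var_norm p E f = ennreal n1" "0 \<le> n1" using nf unfolding less_top_ennreal by blast
  obtain n2 where n2: "var_norm (conj_exp p) E g = ennreal n2" "0 \<le> n2" using ng unfolding less_top_ennreal by blast
  let ?I = "(\<integral>\<^sup>+y. indicator E y * ennreal \<bar>f y * g y\<bar> \<partial>lebesgue)"
  have scales: "?I \<le> ennreal (2 * l1 * l2)" if "n1 < l1" "n2 < l2" for l1 l2
    using that n1 n2 conj_exp_nonneg[OF p1] pae p0
    by (intro nn_integral_mult_le_of_var_modular pae var_modular_le_1_of_var_norm_less p0)
      (auto simp: ennreal_less_iff)
  show ?thesis
  proof (rule ennreal_le_epsilon)
    fix e :: real assume "0 < e"
    with n1 n2 obtain d where d: "0 < d" "2 * (n1 + d) * (n2 + d) \<le> 2 * n1 * n2 + e"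
      by (blast elim: perturbed_product_le)
    have "?I \<le> ennreal (2 * (n1 + d) * (n2 + d))" using scales[of "n1 + d" "n2 + d"] d by simp
    also have "\<dots> \<le> ennreal (2 * n1 * n2 + e)" using d by (intro ennreal_leI)
    also have "\<dots> = 2 * var_norm p E f * var_norm (conj_exp p) E g + ennreal e"
      using n1 n2 \<open>0 < e\<close> by (simp add: ennreal_plus ennreal_mult)
    finally show "?I \<le> 2 * var_norm p E f * var_norm (conj_exp p) E g + ennreal e" .
  qed
qed

lemma exists_level_set_emeasure_pos:
  fixes w :: "'a::euclidean_space \<Rightarrow> real"
  assumes [measurable]: "w \<in> borel_measurable lebesgue" "E \<in> sets lebesgue"
    and wpos: "\<forall>y. 0 < w y" and Epos: "0 < emeasure lebesgue E"
  obtains \<delta> where "0 < \<delta>" "0 < emeasure lebesgue {y \<in> space lebesgue. y \<in> E \<and> \<delta> \<le> w y}"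
proof -
  define Ek where "Ek k = {y \<in> space lebesgue. y \<in> E \<and> 1 / real (Suc k) \<le> w y}" for k
  have [measurable]: "Ek k \<in> sets lebesgue" for k unfolding Ek_def by measurable
  have "E = (\<Union>k. Ek k)"
  proof (intro antisym subsetI)
    fix y assume "y \<in> E"
    obtain k where "inverse (real (Suc k)) < w y" using reals_Archimedean wpos by blast
    then show "y \<in> (\<Union>k. Ek k)" using \<open>y \<in> E\<close> by (auto simp: Ek_def inverse_eq_divide intro!: exI[of _ k])
  qed (auto simp: Ek_def)
  moreover have "range Ek \<subseteq> sets lebesgue" by auto
  ultimately obtain k where "emeasure lebesgue (Ek k) \<noteq> 0"
    using Epos emeasure_UN_eq_0[of lebesgue Ek] by (metis less_irrefl)
  then show thesis by (intro that[of "1 / real (Suc k)"]) (auto simp: Ek_def zero_less_iff_neq_zero)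
qed

lemma var_modular_ge_level_set:
  fixes w :: "'a::euclidean_space \<Rightarrow> real"
  assumes [measurable]: "w \<in> borel_measurable lebesgue" "E \<in> sets lebesgue"
    and qae: "AE y in lebesgue. 1 \<le> q y" and l: "0 < l" "l \<le> \<delta>"
  shows "ennreal (\<delta> / l) * emeasure lebesgue {y \<in> space lebesgue. y \<in> E \<and> \<delta> \<le> w y}
    \<le> var_modular q E (\<lambda>y. w y / l)"
proof -
  let ?A = "{y \<in> space lebesgue. y \<in> E \<and> \<delta> \<le> w y}"
  have "ennreal (\<delta> / l) * emeasure lebesgue ?A = (\<integral>\<^sup>+y. ennreal (\<delta> / l) * indicator ?A y \<partial>lebesgue)"
    by (simp add: nn_integral_cmult_indicator)
  also have "\<dots> \<le> var_modular q E (\<lambda>y. w y / l)"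
    unfolding var_modular_def using qae
  proof (intro nn_integral_mono_AE, eventually_elim)
    case (elim y)
    show ?case
    proof (cases "y \<in> ?A")
      case True
      then have "1 \<le> \<delta> / l" "\<delta> / l \<le> \<bar>w y / l\<bar>" using l by (auto intro!: divide_right_mono)
      moreover have "\<bar>w y / l\<bar> powr 1 \<le> \<bar>w y / l\<bar> powr q y"
        using elim calculation by (intro powr_mono) auto
      ultimately have "\<delta> / l \<le> \<bar>w y / l\<bar> powr q y" by simp
      then show ?thesis using True by (simp add: ennreal_leI)
    qed simp
  qed
  finally show ?thesis .
qed

lemma var_norm_pos:
  assumes qae: "AE y in lebesgue. 1 \<le> q y" and q0: "\<forall>y. 0 \<le> q y"
    and [measurable]: "w \<in> borel_measurable lebesgue" "E \<in> sets lebesgue"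
    and wpos: "\<forall>y. 0 < w y" and Epos: "0 < emeasure lebesgue E"
  shows "0 < var_norm q E w"
proof (rule ccontr)
  assume "\<not> 0 < var_norm q E w"
  then have N0: "var_norm q E w = 0" by (simp add: zero_less_iff_neq_zero)
  obtain \<delta> where \<delta>: "0 < \<delta>" and A: "0 < emeasure lebesgue {y \<in> space lebesgue. y \<in> E \<and> \<delta> \<le> w y}"
    using exists_level_set_emeasure_pos[OF _ _ wpos Epos] by auto
  let ?\<mu> = "emeasure lebesgue {y \<in> space lebesgue. y \<in> E \<and> \<delta> \<le> w y}"
  obtain c where c: "0 < c" "ennreal c < ?\<mu>"
  proof -
    obtain c' where c': "0 < c'" "c' < ?\<mu>" using A dense by blast
    have "c' < top" using c'(2) by (rule order.strict_trans2) simp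
    then obtain c where "c' = ennreal c" "0 \<le> c" unfolding less_top_ennreal by blast
    with c' show thesis by (intro that[of c]) auto
  qed
  define M where "M = 2 / c + 1"
  have M1: "1 \<le> M" using c by (simp add: M_def)
  have l: "0 < \<delta> / M" "\<delta> / M \<le> \<delta>" using \<delta> M1 by (auto simp: divide_le_eq)
  have "ennreal M * ennreal c \<le> ennreal (\<delta> / (\<delta> / M)) * ?\<mu>"
    using c \<delta> M1 by (intro mult_mono) auto
  also have "\<dots> \<le> var_modular q E (\<lambda>y. w y / (\<delta> / M))"
    by (rule var_modular_ge_level_set[OF _ _ qae l]) measurable
  also have "\<dots> \<le> 1" using N0 l by (intro var_modular_le_1_of_var_norm_less[OF _ _ q0]) auto
  finally have "ennreal (M * c) \<le> 1" using c M1 by (simp add: ennreal_mult)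
  moreover have "M * c = 2 + c" using c by (simp add: M_def field_simps)
  ultimately have "ennreal (2 + c) \<le> 1" by simp
  then show False using c ennreal_le_1[of "2 + c"] by linarith
qed

definition A_const :: "('a::euclidean_space \<Rightarrow> real) \<Rightarrow> ('a \<Rightarrow> real) \<Rightarrow> ennreal" where
  "A_const p w = (SUP z\<in>UNIV \<times> {0<..}. var_norm p (ball (fst z) (snd z)) w
        * var_norm (conj_exp p) (ball (fst z) (snd z)) (\<lambda>y. 1 / w y)
        / emeasure lebesgue (ball (fst z) (snd z)))"

lemma A_const_finite: "A_weight p w \<Longrightarrow> A_const p w < top"
  by (simp add: A_weight_def A_const_def)

lemma A_weight_var_norm_ball:
  fixes x :: "'a::euclidean_space"
  assumes P: "exponent_P p" and A: "A_weight p w" and r: "0 < r"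
  shows "0 < var_norm p (ball x r) w" "var_norm p (ball x r) w < top"
    "var_norm (conj_exp p) (ball x r) (\<lambda>y. 1 / w y) < top"
    "var_norm p (ball x r) w * var_norm (conj_exp p) (ball x r) (\<lambda>y. 1 / w y)
       \<le> A_const p w * emeasure lebesgue (ball x r)"
proof -
  note e = exponent_PD[OF P] and c = exponent_P_conj_exp[OF P]
  have [measurable]: "p \<in> borel_measurable lebesgue" "conj_exp p \<in> borel_measurable lebesgue"
    by (fact e(1) c(1))+
  have [measurable]: "w \<in> borel_measurable lebesgue" and wpos: "\<forall>y. 0 < w y"
    using A by (auto simp: A_weight_def weight_def)
  note bm = emeasure_lebesgue_ball_pos_finite[OF r, of x]
  have N1: "0 < var_norm p (ball x r) w"
    by (rule var_norm_pos[OF _ e(4) _ _ wpos]) (use e(2) bm in auto)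
  then show "0 < var_norm p (ball x r) w" .
  have N2: "0 < var_norm (conj_exp p) (ball x r) (\<lambda>y. 1 / w y)"
    by (rule var_norm_pos[OF c(3) c(2)]) (use bm wpos in auto)
  have "var_norm p (ball x r) w * var_norm (conj_exp p) (ball x r) (\<lambda>y. 1 / w y) / emeasure lebesgue (ball x r)
      \<le> A_const p w"
    unfolding A_const_def using r by (intro SUP_upper2[of "(x, r)"]) auto
  then show prod: "var_norm p (ball x r) w * var_norm (conj_exp p) (ball x r) (\<lambda>y. 1 / w y)
      \<le> A_const p w * emeasure lebesgue (ball x r)"
    using bm by (intro ennreal_le_mult_of_divide_le) auto
  also have "\<dots> < top" using A_const_finite[OF A] bm by (simp add: ennreal_mult_less_top)
  finally have "var_norm p (ball x r) w * var_norm (conj_exp p) (ball x r) (\<lambda>y. 1 / w y) < top" .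
  with N1 N2 show "var_norm p (ball x r) w < top" "var_norm (conj_exp p) (ball x r) (\<lambda>y. 1 / w y) < top"
    by (auto simp: ennreal_mult_less_top top_unique)
qed

lemma var_norm_ball_le_morrey_norm:
  fixes x :: "'a::euclidean_space"
  assumes "exponent_P p" "A_weight p w" "0 < \<phi> x t" "0 < t"
  shows "var_norm p (ball x t) (\<lambda>y. w y * f y) \<le> morrey_norm p \<phi> w f * (ennreal (\<phi> x t) * var_norm p (ball x t) w)"
proof -
  have "var_norm p (ball x t) (\<lambda>y. w y * f y) / (ennreal (\<phi> x t) * var_norm p (ball x t) w) \<le> morrey_norm p \<phi> w f"
    unfolding morrey_norm_def using assms(4) by (intro SUP_upper2[of "(x, t)"]) auto
  then show ?thesis using A_weight_var_norm_ball[OF assms(1,2,4), of x] assms(3)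
    by (intro ennreal_le_mult_of_divide_le) (auto simp: ennreal_mult_eq_top_iff)
qed

lemma morrey_norm_le_intro:
  assumes "\<And>x r. 0 < r \<Longrightarrow> 0 < \<phi> x r"
    and "\<And>x r. 0 < r \<Longrightarrow> 0 < var_norm p (ball x r) w \<and> var_norm p (ball x r) w < top"
    and "\<And>x r. 0 < r \<Longrightarrow> var_norm p (ball x r) (\<lambda>y. w y * f y) \<le> C * (ennreal (\<phi> x r) * var_norm p (ball x r) w)"
  shows "morrey_norm p \<phi> w f \<le> C"
  unfolding morrey_norm_def
proof (rule SUP_least, clarsimp)
  fix x and r :: real assume "0 < r"
  with assms show "var_norm p (ball x r) (\<lambda>y. w y * f y) / (ennreal (\<phi> x r) * var_norm p (ball x r) w) \<le> C"
    by (intro divide_le_posI_ennreal) (auto simp: ennreal_zero_less_mult_iff mult.commute)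
qed

lemma morrey_space_mult_bounded:
  assumes q0: "\<forall>y. 0 \<le> q y" and f: "f \<in> morrey_space q \<phi> w"
    and [measurable]: "c \<in> borel_measurable lebesgue" and c1: "\<forall>y. \<bar>c y\<bar> \<le> 1"
  shows "(\<lambda>y. c y * f y) \<in> morrey_space q \<phi> w"
proof -
  have [measurable]: "f \<in> borel_measurable lebesgue" using f by (simp add: morrey_space_def)
  have "\<bar>w y * (c y * f y)\<bar> \<le> \<bar>w y * f y\<bar>" for y
    using mult_right_mono[OF c1[rule_format, of y] abs_ge_zero[of "w y * f y"]] by (simp add: abs_mult ac_simps)
  then have "var_norm q B (\<lambda>y. w y * (c y * f y)) \<le> var_norm q B (\<lambda>y. w y * f y)" for B
    by (intro var_norm_mono[OF q0] AE_I2) auto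
  then have "morrey_norm q \<phi> w (\<lambda>y. c y * f y) \<le> morrey_norm q \<phi> w f"
    unfolding morrey_norm_def by (intro SUP_mono' divide_right_mono_ennreal)
  also have "\<dots> < top" using f by (simp add: morrey_space_def)
  finally show ?thesis by (simp add: morrey_space_def)
qed

definition ball_average :: "'a::euclidean_space \<Rightarrow> real \<Rightarrow> ('a \<Rightarrow> real) \<Rightarrow> ennreal" where
  "ball_average x R f = (\<integral>\<^sup>+y. indicator (ball x R) y * ennreal \<bar>f y\<bar> \<partial>lebesgue) / emeasure lebesgue (ball x R)"

text \<open>Hoelder's inequality on B(x,t) against 1/w, the A_p condition, and doubling from R to t.\<close>

lemma ball_average_le:
  fixes x :: "'a::euclidean_space"
  assumes P: "exponent_P p" and A: "A_weight p w" and [measurable]: "f \<in> borel_measurable lebesgue"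
    and nf: "var_norm p (ball x t) (\<lambda>y. w y * f y) < top"
    and R: "0 < R" "R < t" "t < 2 * R"
  shows "ball_average x R f * var_norm p (ball x t) w
       \<le> ennreal (2 ^ DIM('a)) * (2 * A_const p w) * var_norm p (ball x t) (\<lambda>y. w y * f y)"
proof -
  note e = exponent_PD[OF P]
  have [measurable]: "p \<in> borel_measurable lebesgue" by (fact e(1))
  have [measurable]: "w \<in> borel_measurable lebesgue" and wpos: "\<forall>y. 0 < w y"
    using A by (auto simp: A_weight_def weight_def)
  have t: "0 < t" using R by simp
  note wb = A_weight_var_norm_ball[OF P A t, of x]
  note bR = emeasure_lebesgue_ball_pos_finite[OF R(1), of x]
  let ?IR = "(\<integral>\<^sup>+y. indicator (ball x R) y * ennreal \<bar>f y\<bar> \<partial>lebesgue)"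
  let ?N = "var_norm p (ball x t) w" and ?N' = "var_norm (conj_exp p) (ball x t) (\<lambda>y. 1 / w y)"
    and ?Nf = "var_norm p (ball x t) (\<lambda>y. w y * f y)"
  have "?IR \<le> (\<integral>\<^sup>+y. indicator (ball x t) y * ennreal \<bar>(w y * f y) * (1 / w y)\<bar> \<partial>lebesgue)"
    using R wpos by (intro nn_integral_mono) (auto split: split_indicator simp: less_imp_neq[symmetric])
  also have "\<dots> \<le> 2 * ?Nf * ?N'"
    by (rule var_norm_Hoelder[OF _ _ _ _ e(2) e(3)]) (use nf wb in auto)
  finally have "?IR * ?N \<le> 2 * ?Nf * ?N' * ?N"
    by (rule mult_right_mono) simp
  also have "\<dots> = 2 * ?Nf * (?N' * ?N)" by (simp add: mult.assoc)
  also have "?N' * ?N \<le> A_const p w * emeasure lebesgue (ball x t)" using wb(4) by (simp add: mult.commute)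
  also have "emeasure lebesgue (ball x t) \<le> ennreal (2 ^ DIM('a)) * emeasure lebesgue (ball x R)"
    using R by (intro emeasure_lebesgue_ball_doubling) auto
  finally have "?IR * ?N \<le> emeasure lebesgue (ball x R) * (ennreal (2 ^ DIM('a)) * (2 * A_const p w) * ?Nf)"
    by (simp add: mult_left_mono mult_right_mono ac_simps)
  then have "?IR * ?N / emeasure lebesgue (ball x R) \<le> ennreal (2 ^ DIM('a)) * (2 * A_const p w) * ?Nf"
    using bR by (intro divide_le_posI_ennreal) auto
  then show ?thesis by (simp only: ball_average_def ennreal_divide_times ennreal_times_divide)
qed

definition trunc_fun :: "nat set \<Rightarrow> 'a::euclidean_space \<Rightarrow> real \<Rightarrow> ('a \<Rightarrow> real) list \<Rightarrow> nat \<Rightarrow> 'a \<Rightarrow> real" where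
  "trunc_fun S x r fs i = (\<lambda>y. (if i \<in> S then indicator (- ball x (2 * r)) y
        else indicator (ball x (2 * r)) y) * (fs ! i) y)"

definition partial_trunc_list :: "nat \<Rightarrow> nat \<Rightarrow> nat set \<Rightarrow> 'a::euclidean_space \<Rightarrow> real \<Rightarrow> ('a \<Rightarrow> real) list \<Rightarrow> ('a \<Rightarrow> real) list" where
  "partial_trunc_list m k S x r fs = map (\<lambda>i. if i < k then trunc_fun S x r fs i else fs ! i) [0..<m]"

lemma partial_trunc_list_full: "partial_trunc_list m m S x r fs = trunc_list m S x r fs"
  by (simp add: partial_trunc_list_def trunc_list_def trunc_fun_def)

lemma partial_trunc_list_0: "length fs = m \<Longrightarrow> partial_trunc_list m 0 S x r fs = fs"
  by (simp add: partial_trunc_list_def) (metis map_nth)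

lemma in_prod_partial_trunc_list:
  assumes "in_prod m X fs" "\<And>S i. i < m \<Longrightarrow> trunc_fun S x r fs i \<in> X i"
  shows "in_prod m X (partial_trunc_list m k S x r fs)"
  using assms by (auto simp: in_prod_def partial_trunc_list_def)

lemma trunc_fun_in_morrey_space:
  assumes q0: "\<forall>y. 0 \<le> q y" and f: "fs ! i \<in> morrey_space q \<phi> w"
  shows "trunc_fun S x r fs i \<in> morrey_space q \<phi> w"
  unfolding trunc_fun_def
proof (rule morrey_space_mult_bounded[OF q0 f])
  have b: "ball x (2 * r) \<in> sets lebesgue" by (rule fmeasurableD) simp
  then have "- ball x (2 * r) \<in> sets lebesgue"
    using sets.compl_sets[OF b] by (simp add: Compl_eq_Diff_UNIV)
  with b show "(\<lambda>y. if i \<in> S then indicator (- ball x (2 * r)) y else indicator (ball x (2 * r)) y :: real)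
      \<in> borel_measurable lebesgue"
    by (cases "i \<in> S") (auto intro!: borel_measurable_indicator)
qed (auto split: split_indicator)

lemma sum_Pow_lessThan_Suc:
  fixes F :: "nat set \<Rightarrow> 'b::comm_monoid_add"
  shows "(\<Sum>S\<in>Pow {..<Suc k}. F S) = (\<Sum>S\<in>Pow {..<k}. F S) + (\<Sum>S\<in>Pow {..<k}. F (insert k S))"
proof -
  have P: "Pow {..<Suc k} = Pow {..<k} \<union> insert k ` Pow {..<k}"
    by (simp add: lessThan_Suc Pow_insert)
  have inj: "inj_on (insert k) (Pow {..<k})"
    by (rule inj_onI) (metis PowD insert_ident lessThan_iff less_irrefl subsetD)
  have "(\<Sum>S\<in>Pow {..<Suc k}. F S) = (\<Sum>S\<in>Pow {..<k}. F S) + (\<Sum>S\<in>insert k ` Pow {..<k}. F S)"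
    unfolding P by (rule sum.union_disjoint) auto
  also have "(\<Sum>S\<in>insert k ` Pow {..<k}. F S) = (\<Sum>S\<in>Pow {..<k}. F (insert k S))"
    by (rule sum.reindex[OF inj, unfolded comp_def])
  finally show ?thesis .
qed

lemma abs_partial_trunc_list_le_split:
  assumes sub: "m_sublinear m X T" and ip: "in_prod m X fs"
    and cl: "\<And>S i. i < m \<Longrightarrow> trunc_fun S x r fs i \<in> X i"
    and k: "k < m" and S: "S \<subseteq> {..<k}"
  shows "\<bar>T (partial_trunc_list m k S x r fs) y\<bar>
    \<le> \<bar>T (partial_trunc_list m (Suc k) S x r fs) y\<bar> + \<bar>T (partial_trunc_list m (Suc k) (insert k S) x r fs) y\<bar>"
proof -
  let ?L = "partial_trunc_list m k S x r fs"
  let ?g = "trunc_fun S x r fs k" and ?h = "trunc_fun (insert k S) x r fs k"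
  have "k \<notin> S" using S by auto
  have e1: "?L[k := (\<lambda>y. ?g y + ?h y)] = ?L"
  proof -
    have "(\<lambda>y. ?g y + ?h y) = fs ! k" using \<open>k \<notin> S\<close>
      by (auto simp: trunc_fun_def fun_eq_iff split: split_indicator)
    moreover have "?L ! k = fs ! k" using k by (simp add: partial_trunc_list_def)
    ultimately show ?thesis by (metis list_update_id)
  qed
  have e2: "?L[k := ?g] = partial_trunc_list m (Suc k) S x r fs"
    using k by (intro nth_equalityI) (auto simp: partial_trunc_list_def nth_list_update less_Suc_eq)
  have e3: "?L[k := ?h] = partial_trunc_list m (Suc k) (insert k S) x r fs"
    using k by (intro nth_equalityI) (auto simp: partial_trunc_list_def nth_list_update less_Suc_eq trunc_fun_def)
  have "in_prod m X ?L" "?g \<in> X k" "?h \<in> X k" using in_prod_partial_trunc_list[OF ip cl] cl k by auto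
  with sub k have "\<bar>T (?L[k := (\<lambda>y. ?g y + ?h y)]) y\<bar> \<le> \<bar>T (?L[k := ?g]) y\<bar> + \<bar>T (?L[k := ?h]) y\<bar>"
    unfolding m_sublinear_def by blast
  then show ?thesis unfolding e1 e2 e3 .
qed

lemma abs_le_sum_partial_trunc_list:
  assumes sub: "m_sublinear m X T" and ip: "in_prod m X fs"
    and cl: "\<And>S i. i < m \<Longrightarrow> trunc_fun S x r fs i \<in> X i"
  shows "k \<le> m \<Longrightarrow> \<bar>T fs y\<bar> \<le> (\<Sum>S\<in>Pow {..<k}. \<bar>T (partial_trunc_list m k S x r fs) y\<bar>)"
proof (induction k)
  case 0
  then show ?case using ip by (simp add: in_prod_def partial_trunc_list_0)
next
  case (Suc k)
  then have "\<bar>T fs y\<bar> \<le> (\<Sum>S\<in>Pow {..<k}. \<bar>T (partial_trunc_list m k S x r fs) y\<bar>)" by simp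
  also have "\<dots> \<le> (\<Sum>S\<in>Pow {..<k}. \<bar>T (partial_trunc_list m (Suc k) S x r fs) y\<bar>
      + \<bar>T (partial_trunc_list m (Suc k) (insert k S) x r fs) y\<bar>)"
    using Suc by (intro sum_mono abs_partial_trunc_list_le_split[OF sub ip cl]) auto
  also have "\<dots> = (\<Sum>S\<in>Pow {..<Suc k}. \<bar>T (partial_trunc_list m (Suc k) S x r fs) y\<bar>)"
    by (simp add: sum_Pow_lessThan_Suc sum.distrib)
  finally show ?case .
qed

lemma abs_le_local_plus_tails:
  assumes sub: "m_sublinear m X T" and ip: "in_prod m X fs"
    and cl: "\<And>S i. i < m \<Longrightarrow> trunc_fun S x r fs i \<in> X i"
  shows "\<bar>T fs y\<bar> \<le> \<bar>T (trunc_list m {} x r fs) y\<bar> + (\<Sum>S\<in>Pow {..<m} - {{}}. \<bar>T (trunc_list m S x r fs) y\<bar>)"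
proof -
  have "\<bar>T fs y\<bar> \<le> (\<Sum>S\<in>Pow {..<m}. \<bar>T (trunc_list m S x r fs) y\<bar>)"
    using abs_le_sum_partial_trunc_list[OF sub ip cl, of m y] by (simp add: partial_trunc_list_full)
  also have "\<dots> = \<bar>T (trunc_list m {} x r fs) y\<bar> + (\<Sum>S\<in>Pow {..<m} - {{}}. \<bar>T (trunc_list m S x r fs) y\<bar>)"
    by (subst sum.remove[of _ "{}"]) auto
  finally show ?thesis .
qed

lemma suminf_indicator_disjoint_family:
  fixes c :: "nat \<Rightarrow> ennreal"
  assumes "disjoint_family I" "t \<in> I k"
  shows "(\<Sum>j. c j * indicator (I j) t) = c k"
proof -
  have "(\<lambda>j. c j * indicator (I j) t) = (\<lambda>j. if j = k then c k else 0)"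
    using assms by (auto simp: fun_eq_iff disjoint_family_on_def split: split_indicator)
  then show ?thesis using sums_unique[OF sums_single[of k "\<lambda>_. c k"]] by simp
qed

lemma disjoint_family_dyadic_intervals:
  fixes r :: real
  assumes "0 < r"
  shows "disjoint_family (\<lambda>j::nat. {2 ^ (j + 2) * r <..< 2 * (2 ^ (j + 2) * r)})"
proof -
  have sep: "{2 ^ (j + 2) * r <..< 2 * (2 ^ (j + 2) * r)} \<inter> {2 ^ (k + 2) * r <..< 2 * (2 ^ (k + 2) * r)} = {}"
    if "j < k" for j k :: nat
  proof -
    have "(2::real) ^ (Suc j + 2) \<le> 2 ^ (k + 2)" using that by (intro power_increasing) auto
    then have "2 * (2 ^ (j + 2) * r) \<le> 2 ^ (k + 2) * r" using assms by (simp add: mult_right_mono)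
    moreover have "{a <..< 2 * a} \<inter> {b <..< 2 * b} = {}" if "2 * a \<le> b" for a b :: real
      using that by auto
    ultimately show ?thesis by blast
  qed
  show ?thesis unfolding disjoint_family_on_def
  proof (intro ballI impI)
    fix j k :: nat assume "j \<noteq> k"
    then show "{2 ^ (j + 2) * r <..< 2 * (2 ^ (j + 2) * r)} \<inter> {2 ^ (k + 2) * r <..< 2 * (2 ^ (k + 2) * r)} = {}"
      using sep[of j k] sep[of k j] by (cases "j < k") (auto simp: Int_commute)
  qed
qed

text \<open>A Riemann sum for the integral: the j-th term is controlled on (R_j, 2 R_j), R_j = 2^(j+2) r,
  where dt/t has mass at least 1/2.\<close>

lemma suminf_le_dyadic_integral:
  fixes G :: "real \<Rightarrow> ennreal" and d :: "nat \<Rightarrow> ennreal"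
  assumes r: "0 < r" and Q: "Q < top"
    and bound: "\<And>j t. 2 ^ (j + 2) * r < t \<Longrightarrow> t < 2 * (2 ^ (j + 2) * r) \<Longrightarrow> d j \<le> Q * G t"
  shows "(\<Sum>j. d j) \<le> 2 * Q * (\<integral>\<^sup>+t. indicator {r<..} t * G t / ennreal t \<partial>lborel)"
proof -
  define R where "R j = 2 ^ (j + 2) * r" for j :: nat
  define I where "I = (\<lambda>j. {R j <..< 2 * R j})"
  define c where "c j = d j * ennreal (1 / (2 * R j))" for j
  have R: "0 < R j" "r < R j" for j
    using r one_less_power[of "2::real" "j + 2"] by (auto simp: R_def)
  have disj: "disjoint_family I"
    unfolding I_def R_def by (rule disjoint_family_dyadic_intervals[OF r])
  define F where "F t = (\<Sum>j. c j * indicator (I j) t)" for t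
  have "F t \<le> Q * (indicator {r<..} t * G t / ennreal t)" for t
  proof (cases "\<exists>k. t \<in> I k")
    case True
    then obtain k where k: "t \<in> I k" by blast
    then have t: "R k < t" "t < 2 * R k" "r < t" using R[of k] by (auto simp: I_def)
    have "F t = c k" unfolding F_def by (rule suminf_indicator_disjoint_family[OF disj k])
    also have "\<dots> \<le> Q * G t * ennreal (1 / t)"
      unfolding c_def using bound[of k t] t R[of k]
      by (intro mult_mono ennreal_leI divide_left_mono) (auto simp: R_def)
    also have "\<dots> = Q * (indicator {r<..} t * G t / ennreal t)"
      using t R[of k] by (simp add: ennreal_divide_real mult.assoc)
    finally show ?thesis .
  qed (simp add: F_def)
  then have "(\<integral>\<^sup>+t. F t \<partial>lborel) \<le> Q * (\<integral>\<^sup>+t. indicator {r<..} t * G t / ennreal t \<partial>lborel)"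
    by (intro order.trans[OF nn_integral_mono nn_integral_cmult_le[OF Q]])
  moreover have "(\<integral>\<^sup>+t. F t \<partial>lborel) = (\<Sum>j. d j) * ennreal (1 / 2)"
  proof -
    have "(\<integral>\<^sup>+t. F t \<partial>lborel) = (\<Sum>j. c j * emeasure lborel (I j))"
      unfolding F_def by (subst nn_integral_suminf) (auto simp: I_def nn_integral_cmult_indicator)
    also have "\<dots> = (\<Sum>j. d j * ennreal (1 / 2))"
    proof (intro suminf_cong)
      fix j
      have "ennreal (1 / (2 * R j)) * ennreal (R j) = ennreal (1 / 2)"
        using R[of j] by (simp add: ennreal_mult[symmetric] del: ennreal_mult')
      then show "c j * emeasure lborel (I j) = d j * ennreal (1 / 2)"
        using R[of j] by (simp add: c_def I_def mult.assoc)
    qed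
    finally show ?thesis by simp
  qed
  ultimately have "(\<Sum>j. d j) * ennreal (1 / 2) * 2 \<le> Q * (\<integral>\<^sup>+t. indicator {r<..} t * G t / ennreal t \<partial>lborel) * 2"
    by (intro mult_right_mono) auto
  moreover have "ennreal (1 / 2) * 2 = 1" using ennreal_mult[of "1/2" 2] by simp
  ultimately show ?thesis by (simp add: mult.assoc mult.commute mult.left_commute)
qed

definition tail_ratio :: "nat \<Rightarrow> (nat \<Rightarrow> 'a::euclidean_space \<Rightarrow> real) \<Rightarrow> (nat \<Rightarrow> 'a \<Rightarrow> real \<Rightarrow> real)
    \<Rightarrow> (nat \<Rightarrow> 'a \<Rightarrow> real) \<Rightarrow> 'a \<Rightarrow> real \<Rightarrow> ennreal" where
  "tail_ratio m ps \<phi>1 \<omega> x t =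
     essinf_on {t<..} (\<lambda>\<eta>. \<Prod>i<m. ennreal (\<phi>1 i x \<eta>) * var_norm (ps i) (ball x \<eta>) (\<omega> i))
       / (\<Prod>i<m. var_norm (ps i) (ball x t) (\<omega> i))"

definition tail_integral :: "nat \<Rightarrow> (nat \<Rightarrow> 'a::euclidean_space \<Rightarrow> real) \<Rightarrow> (nat \<Rightarrow> 'a \<Rightarrow> real \<Rightarrow> real)
    \<Rightarrow> (nat \<Rightarrow> 'a \<Rightarrow> real) \<Rightarrow> 'a \<Rightarrow> real \<Rightarrow> ennreal" where
  "tail_integral m ps \<phi>1 \<omega> x r = (\<integral>\<^sup>+t. indicator {r<..} t * tail_ratio m ps \<phi>1 \<omega> x t / ennreal t \<partial>lborel)"

lemma ball_average_mult_var_norm_le: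
  fixes x :: "'a::euclidean_space"
  assumes P: "exponent_P p" and A: "A_weight p w" and \<phi>: "pos_meas_fun \<phi>" and f: "f \<in> morrey_space p \<phi> w"
    and R: "0 < R" "R < t" "t < 2 * R" and \<eta>: "t \<le> \<eta>"
  shows "ball_average x R f * var_norm p (ball x t) w
    \<le> ennreal (2 ^ DIM('a)) * (2 * A_const p w) * morrey_norm p \<phi> w f * (ennreal (\<phi> x \<eta>) * var_norm p (ball x \<eta>) w)"
proof -
  have \<phi>_pos: "0 < \<phi> x \<eta>" using \<phi> R \<eta> by (auto simp: pos_meas_fun_def)
  have "var_norm p (ball x t) (\<lambda>y. w y * f y) \<le> var_norm p (ball x \<eta>) (\<lambda>y. w y * f y)"
    using \<eta> by (intro var_norm_mono_set) auto
  also have "\<dots> \<le> morrey_norm p \<phi> w f * (ennreal (\<phi> x \<eta>) * var_norm p (ball x \<eta>) w)"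
    using R \<eta> by (intro var_norm_ball_le_morrey_norm P A \<phi>_pos) auto
  finally have Nf: "var_norm p (ball x t) (\<lambda>y. w y * f y) \<le> \<dots>" .
  also have "\<dots> < top"
    using f A_weight_var_norm_ball[OF P A, of \<eta> x] R \<eta>
    by (simp add: morrey_space_def ennreal_mult_less_top)
  finally have "var_norm p (ball x t) (\<lambda>y. w y * f y) < top" .
  then have "ball_average x R f * var_norm p (ball x t) w
      \<le> ennreal (2 ^ DIM('a)) * (2 * A_const p w) * var_norm p (ball x t) (\<lambda>y. w y * f y)"
    using f R by (intro ball_average_le P A) (auto simp: morrey_space_def)
  also have "\<dots> \<le> ennreal (2 ^ DIM('a)) * (2 * A_const p w) * morrey_norm p \<phi> w f
      * (ennreal (\<phi> x \<eta>) * var_norm p (ball x \<eta>) w)"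
    using Nf by (simp add: mult.assoc mult_left_mono)
  finally show ?thesis .
qed

lemma prod_ball_averages_le:
  fixes x :: "'a::euclidean_space"
  assumes P: "\<forall>i<m. exponent_P (ps i)" and A: "\<forall>i<m. A_weight (ps i) (\<omega> i)"
    and \<phi>: "\<forall>i<m. pos_meas_fun (\<phi>1 i)" and ip: "in_prod m (\<lambda>i. morrey_space (ps i) (\<phi>1 i) (\<omega> i)) fs"
    and R: "0 < R" "R < t" "t < 2 * R"
  shows "(\<Prod>i<m. ball_average x R (fs ! i))
    \<le> (\<Prod>i<m. ennreal (2 ^ DIM('a)) * (2 * A_const (ps i) (\<omega> i)) * morrey_norm (ps i) (\<phi>1 i) (\<omega> i) (fs ! i))
       * tail_ratio m ps \<phi>1 \<omega> x t"
proof -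
  let ?K = "\<lambda>i. ennreal (2 ^ DIM('a)) * (2 * A_const (ps i) (\<omega> i)) * morrey_norm (ps i) (\<phi>1 i) (\<omega> i) (fs ! i)"
  let ?N = "\<lambda>i. var_norm (ps i) (ball x t) (\<omega> i)"
  have fs: "fs ! i \<in> morrey_space (ps i) (\<phi>1 i) (\<omega> i)" if "i < m" for i
    using ip that by (auto simp: in_prod_def)
  have N: "0 < ?N i" "?N i < top" if "i < m" for i
    using A_weight_var_norm_ball[of "ps i" "\<omega> i" t x] P A R that by auto
  have K: "(\<Prod>i<m. ?K i) < top"
    using fs A by (intro prod_less_top_ennreal)
      (auto simp: morrey_space_def ennreal_mult_less_top A_const_finite)
  have "(\<Prod>i<m. ball_average x R (fs ! i)) * (\<Prod>i<m. ?N i)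
      \<le> (\<Prod>i<m. ?K i) * essinf_on {t<..} (\<lambda>\<eta>. \<Prod>i<m. ennreal (\<phi>1 i x \<eta>) * var_norm (ps i) (ball x \<eta>) (\<omega> i))"
  proof (rule le_mult_essinf_on[OF _ K])
    show "\<forall>\<eta>\<in>{t<..}. (\<Prod>i<m. ball_average x R (fs ! i)) * (\<Prod>i<m. ?N i)
        \<le> (\<Prod>i<m. ?K i) * (\<Prod>i<m. ennreal (\<phi>1 i x \<eta>) * var_norm (ps i) (ball x \<eta>) (\<omega> i))"
    proof
      fix \<eta> assume "\<eta> \<in> {t<..}"
      then have "ball_average x R (fs ! i) * ?N i \<le> ?K i * (ennreal (\<phi>1 i x \<eta>) * var_norm (ps i) (ball x \<eta>) (\<omega> i))"
        if "i < m" for i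
        using P A \<phi> fs R that by (intro ball_average_mult_var_norm_le) auto
      then have "(\<Prod>i<m. ball_average x R (fs ! i) * ?N i)
          \<le> (\<Prod>i<m. ?K i * (ennreal (\<phi>1 i x \<eta>) * var_norm (ps i) (ball x \<eta>) (\<omega> i)))"
        by (intro prod_mono_ennreal) auto
      then show "(\<Prod>i<m. ball_average x R (fs ! i)) * (\<Prod>i<m. ?N i)
          \<le> (\<Prod>i<m. ?K i) * (\<Prod>i<m. ennreal (\<phi>1 i x \<eta>) * var_norm (ps i) (ball x \<eta>) (\<omega> i))"
        by (simp add: prod.distrib)
    qed
  qed auto
  moreover have "(\<Prod>i<m. ?N i) \<noteq> 0"
  proof
    assume "(\<Prod>i<m. ?N i) = 0"
    then obtain i where "i < m" "?N i = 0" by (auto simp: prod_zero_iff)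
    with N(1)[of i] show False by simp
  qed
  moreover have "(\<Prod>i<m. ?N i) \<noteq> top" using N(2) prod_less_top_ennreal[of "{..<m}" ?N] by auto
  ultimately show ?thesis
    by (auto simp: tail_ratio_def ennreal_times_divide intro!: ennreal_le_divide_of_mult_le)
qed

lemma suminf_prod_ball_averages_le:
  fixes x :: "'a::euclidean_space"
  assumes P: "\<forall>i<m. exponent_P (ps i)" and A: "\<forall>i<m. A_weight (ps i) (\<omega> i)"
    and \<phi>: "\<forall>i<m. pos_meas_fun (\<phi>1 i)" and ip: "in_prod m (\<lambda>i. morrey_space (ps i) (\<phi>1 i) (\<omega> i)) fs"
    and r: "0 < r"
  shows "(\<Sum>j. \<Prod>i<m. ball_average x (2 ^ (j + 2) * r) (fs ! i))
    \<le> 2 * (\<Prod>i<m. ennreal (2 ^ DIM('a)) * (2 * A_const (ps i) (\<omega> i)) * morrey_norm (ps i) (\<phi>1 i) (\<omega> i) (fs ! i))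
       * tail_integral m ps \<phi>1 \<omega> x r"
  unfolding tail_integral_def
proof (rule suminf_le_dyadic_integral[OF r])
  show "(\<Prod>i<m. ennreal (2 ^ DIM('a)) * (2 * A_const (ps i) (\<omega> i)) * morrey_norm (ps i) (\<phi>1 i) (\<omega> i) (fs ! i)) < top"
    using ip A by (intro prod_less_top_ennreal)
      (auto simp: in_prod_def morrey_space_def ennreal_mult_less_top A_const_finite)
qed (use r in \<open>auto intro!: prod_ball_averages_le[OF P A \<phi> ip]\<close>)

lemma var_norm_ball_le_local_plus_tails:
  fixes x :: "'a::euclidean_space"
  assumes [measurable]: "p \<in> borel_measurable lebesgue" "v \<in> borel_measurable lebesgue"
    and p1: "\<forall>y. 1 \<le> p y"
    and sub: "m_sublinear m X T" and ip: "in_prod m X fs"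
    and cl: "\<And>S i. i < m \<Longrightarrow> trunc_fun S x r fs i \<in> X i"
    and tails: "(\<Sum>S\<in>Pow {..<m} - {{}}. Linf_norm (ball x r) (T (trunc_list m S x r fs))) \<le> \<Lambda>"
    and \<Lambda>: "\<Lambda> < top"
  shows "var_norm p (ball x r) (\<lambda>y. v y * T fs y)
    \<le> 4 * (var_norm p (ball x r) (\<lambda>y. v y * T (trunc_list m {} x r fs) y) + \<Lambda> * var_norm p (ball x r) v)"
proof -
  obtain L where L: "\<Lambda> = ennreal L" "0 \<le> L" using \<Lambda> by (cases \<Lambda>) auto
  have [measurable]: "ball x r \<in> sets lebesgue" by (rule fmeasurableD) simp
  have "AE y in lebesgue. \<forall>S\<in>Pow {..<m} - {{}}. y \<in> ball x r \<longrightarrow>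
      ennreal \<bar>T (trunc_list m S x r fs) y\<bar> \<le> Linf_norm (ball x r) (T (trunc_list m S x r fs))"
    by (intro eventually_ball_finite ballI AE_le_Linf_norm) auto
  then have h: "AE y in lebesgue. y \<in> ball x r \<longrightarrow>
      \<bar>v y * T fs y\<bar> \<le> \<bar>v y * T (trunc_list m {} x r fs) y\<bar> + L * \<bar>v y\<bar>"
  proof (eventually_elim, intro impI)
    case (elim y)
    assume "y \<in> ball x r"
    have "ennreal (\<Sum>S\<in>Pow {..<m} - {{}}. \<bar>T (trunc_list m S x r fs) y\<bar>)
        = (\<Sum>S\<in>Pow {..<m} - {{}}. ennreal \<bar>T (trunc_list m S x r fs) y\<bar>)" by simp
    also have "\<dots> \<le> ennreal L"
      using elim \<open>y \<in> ball x r\<close> by (intro order.trans[OF sum_mono tails[unfolded L(1)]]) auto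
    finally have "(\<Sum>S\<in>Pow {..<m} - {{}}. \<bar>T (trunc_list m S x r fs) y\<bar>) \<le> L"
      using L by (simp add: ennreal_le_iff)
    then have "\<bar>T fs y\<bar> \<le> \<bar>T (trunc_list m {} x r fs) y\<bar> + L"
      using abs_le_local_plus_tails[OF sub ip cl, of y] by simp
    then have "\<bar>v y\<bar> * \<bar>T fs y\<bar> \<le> \<bar>v y\<bar> * (\<bar>T (trunc_list m {} x r fs) y\<bar> + L)"
      by (intro mult_left_mono) auto
    then show "\<bar>v y * T fs y\<bar> \<le> \<bar>v y * T (trunc_list m {} x r fs) y\<bar> + L * \<bar>v y\<bar>"
      by (simp add: abs_mult algebra_simps)
  qed
  show ?thesis unfolding L(1)
    by (rule var_norm_le_add_const[OF _ _ _ p1 L(2) h]) measurable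
qed

lemma sum_Linf_norm_tails_le:
  fixes x :: "'a::euclidean_space"
  assumes ps_P: "\<forall>i<m. exponent_P (ps i)" and \<omega>_A: "\<forall>i<m. A_weight (ps i) (\<omega> i)"
    and \<phi>1_pos: "\<forall>i<m. pos_meas_fun (\<phi>1 i)"
    and ip: "in_prod m (\<lambda>i. morrey_space (ps i) (\<phi>1 i) (\<omega> i)) fs" and r: "0 < r"
    and LS: "\<And>S. S \<subseteq> {..<m} \<Longrightarrow> S \<noteq> {} \<Longrightarrow> Linf_norm (ball x r) (T (trunc_list m S x r fs))
      \<le> ennreal CS * (\<Sum>j. \<Prod>i<m. ball_average x (2 ^ (j + 2) * r) (fs ! i))"
    and tail: "tail_integral m ps \<phi>1 \<omega> x r \<le> I"
  shows "(\<Sum>S\<in>Pow {..<m} - {{}}. Linf_norm (ball x r) (T (trunc_list m S x r fs)))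
    \<le> of_nat (card (Pow {..<m} - {{}})) * (ennreal CS * (2 * ((\<Prod>i<m. ennreal (2 ^ DIM('a)) * (2 * A_const (ps i) (\<omega> i)))
        * (\<Prod>i<m. morrey_norm (ps i) (\<phi>1 i) (\<omega> i) (fs ! i))) * I))"
proof -
  have "(\<Sum>j. \<Prod>i<m. ball_average x (2 ^ (j + 2) * r) (fs ! i))
      \<le> 2 * (\<Prod>i<m. ennreal (2 ^ DIM('a)) * (2 * A_const (ps i) (\<omega> i)) * morrey_norm (ps i) (\<phi>1 i) (\<omega> i) (fs ! i))
        * tail_integral m ps \<phi>1 \<omega> x r"
    by (rule suminf_prod_ball_averages_le[OF ps_P \<omega>_A \<phi>1_pos ip r])
  also have "\<dots> \<le> 2 * ((\<Prod>i<m. ennreal (2 ^ DIM('a)) * (2 * A_const (ps i) (\<omega> i)))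
        * (\<Prod>i<m. morrey_norm (ps i) (\<phi>1 i) (\<omega> i) (fs ! i))) * I"
    using tail by (simp add: prod.distrib mult_left_mono)
  finally have dyadic: "(\<Sum>j. \<Prod>i<m. ball_average x (2 ^ (j + 2) * r) (fs ! i))
      \<le> 2 * ((\<Prod>i<m. ennreal (2 ^ DIM('a)) * (2 * A_const (ps i) (\<omega> i)))
        * (\<Prod>i<m. morrey_norm (ps i) (\<phi>1 i) (\<omega> i) (fs ! i))) * I" .
  have "(\<Sum>S\<in>Pow {..<m} - {{}}. Linf_norm (ball x r) (T (trunc_list m S x r fs)))
      \<le> (\<Sum>S\<in>Pow {..<m} - {{}}. ennreal CS * (\<Sum>j. \<Prod>i<m. ball_average x (2 ^ (j + 2) * r) (fs ! i)))"
    using LS by (intro sum_mono) auto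
  also have "\<dots> = of_nat (card (Pow {..<m} - {{}})) * (ennreal CS * (\<Sum>j. \<Prod>i<m. ball_average x (2 ^ (j + 2) * r) (fs ! i)))"
    by simp
  finally show ?thesis using dyadic by (elim order.trans) (intro mult_left_mono; simp)
qed

lemma morrey_norm_sublinear_le:
  fixes p :: "'a::euclidean_space \<Rightarrow> real"
  assumes p_P: "exponent_P p" and ps_P: "\<forall>i<m. exponent_P (ps i)"
    and \<omega>_A: "\<forall>i<m. A_weight (ps i) (\<omega> i)" and v_A: "A_weight p v"
    and \<phi>1_pos: "\<forall>i<m. pos_meas_fun (\<phi>1 i)" and \<phi>2_pos: "pos_meas_fun \<phi>2"
    and T_sub: "m_sublinear m (\<lambda>i. morrey_space (ps i) (\<phi>1 i) (\<omega> i)) T"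
    and ip: "in_prod m (\<lambda>i. morrey_space (ps i) (\<phi>1 i) (\<omega> i)) fs"
    and LS: "\<And>x r S. 0 < r \<Longrightarrow> S \<subseteq> {..<m} \<Longrightarrow> S \<noteq> {} \<Longrightarrow> Linf_norm (ball x r) (T (trunc_list m S x r fs))
      \<le> ennreal CS * (\<Sum>j. \<Prod>i<m. ball_average x (2 ^ (j + 2) * r) (fs ! i))"
    and LB: "\<And>x r. 0 < r \<Longrightarrow> morrey_norm p \<phi>2 v (T (trunc_list m {} x r fs))
      \<le> ennreal CB * (\<Prod>i<m. morrey_norm (ps i) (\<phi>1 i) (\<omega> i) (fs ! i))"
    and tail: "\<And>x r. 0 < r \<Longrightarrow> tail_integral m ps \<phi>1 \<omega> x r \<le> Mc * ennreal (\<phi>2 x r)" and Mc: "Mc < top"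
  shows "morrey_norm p \<phi>2 v (T fs) \<le> 4 * (ennreal CB + of_nat (card (Pow {..<m} - {{}})) * ennreal CS
      * (2 * (\<Prod>i<m. ennreal (2 ^ DIM('a)) * (2 * A_const (ps i) (\<omega> i))) * Mc))
    * (\<Prod>i<m. morrey_norm (ps i) (\<phi>1 i) (\<omega> i) (fs ! i))"
    (is "_ \<le> 4 * (_ + ?c * _ * (2 * ?K * _)) * ?P")
proof (rule morrey_norm_le_intro)
  note p = exponent_PD[OF p_P]
  have fs: "fs ! i \<in> morrey_space (ps i) (\<phi>1 i) (\<omega> i)" if "i < m" for i using ip that by (auto simp: in_prod_def)
  have P: "?P < top" using fs by (intro prod_less_top_ennreal) (auto simp: morrey_space_def)
  have K: "?K < top" using \<omega>_A by (intro prod_less_top_ennreal) (auto simp: ennreal_mult_less_top A_const_finite)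
  fix x and r :: real assume r: "0 < r"
  then show "0 < \<phi>2 x r" using \<phi>2_pos by (auto simp: pos_meas_fun_def)
  show "0 < var_norm p (ball x r) v \<and> var_norm p (ball x r) v < top"
    using A_weight_var_norm_ball[OF p_P v_A r] by auto
  have tails: "(\<Sum>S\<in>Pow {..<m} - {{}}. Linf_norm (ball x r) (T (trunc_list m S x r fs)))
      \<le> ?c * (ennreal CS * (2 * (?K * ?P) * (Mc * ennreal (\<phi>2 x r))))"
    by (rule sum_Linf_norm_tails_le[where T=T and x=x, OF ps_P \<omega>_A \<phi>1_pos ip r LS[OF r] tail[OF r]])
  have fin: "?c * (ennreal CS * (2 * (?K * ?P) * (Mc * ennreal (\<phi>2 x r)))) < top"
    using K P Mc of_nat_less_top[of "card (Pow {..<m} - {{}})"]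
    by (simp only: ennreal_mult_less_top ennreal_less_top ennreal_numeral_less_top) blast
  have cl: "trunc_fun S x r fs i \<in> morrey_space (ps i) (\<phi>1 i) (\<omega> i)" if "i < m" for S i
    using ps_P fs that by (intro trunc_fun_in_morrey_space) (auto dest: exponent_PD(4))
  have vm: "v \<in> borel_measurable lebesgue" using v_A by (simp add: A_weight_def weight_def)
  have "var_norm p (ball x r) (\<lambda>y. v y * T fs y)
      \<le> 4 * (var_norm p (ball x r) (\<lambda>y. v y * T (trunc_list m {} x r fs) y)
        + ?c * (ennreal CS * (2 * (?K * ?P) * (Mc * ennreal (\<phi>2 x r)))) * var_norm p (ball x r) v)"
    by (rule var_norm_ball_le_local_plus_tails[OF p(1) vm p(2) T_sub ip cl tails fin])
  also have "var_norm p (ball x r) (\<lambda>y. v y * T (trunc_list m {} x r fs) y)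
      \<le> ennreal CB * ?P * (ennreal (\<phi>2 x r) * var_norm p (ball x r) v)"
    using LB[OF r] \<phi>2_pos r
    by (intro order.trans[OF var_norm_ball_le_morrey_norm[OF p_P v_A, where \<phi>=\<phi>2 and x=x and t=r]] mult_right_mono)
      (auto simp: pos_meas_fun_def)
  also have "4 * (ennreal CB * ?P * (ennreal (\<phi>2 x r) * var_norm p (ball x r) v)
        + ?c * (ennreal CS * (2 * (?K * ?P) * (Mc * ennreal (\<phi>2 x r)))) * var_norm p (ball x r) v)
      = 4 * (ennreal CB + ?c * ennreal CS * (2 * ?K * Mc)) * ?P * (ennreal (\<phi>2 x r) * var_norm p (ball x r) v)"
    by (simp only: distrib_left distrib_right ac_simps)
  finally show "var_norm p (ball x r) (\<lambda>y. v y * T fs y)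
      \<le> 4 * (ennreal CB + ?c * ennreal CS * (2 * ?K * Mc)) * ?P * (ennreal (\<phi>2 x r) * var_norm p (ball x r) v)"
    by (simp add: add_mono mult_left_mono)
qed

theorem theorem1p5:
  fixes m :: nat
    and p :: "'a::euclidean_space \<Rightarrow> real"
    and ps :: "nat \<Rightarrow> 'a \<Rightarrow> real"
    and \<omega> :: "nat \<Rightarrow> 'a \<Rightarrow> real"
    and v :: "'a \<Rightarrow> real"
    and \<phi>1 :: "nat \<Rightarrow> 'a \<Rightarrow> real \<Rightarrow> real"
    and \<phi>2 :: "'a \<Rightarrow> real \<Rightarrow> real"
    and T :: "('a \<Rightarrow> real) list \<Rightarrow> 'a \<Rightarrow> real"
  assumes p_P: "exponent_P p" and p_LH: "exponent_LH p"
    and ps_P: "\<forall>i<m. exponent_P (ps i)" and ps_LH: "\<forall>i<m. exponent_LH (ps i)"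
    and p_sum: "\<forall>x. 1 / p x = (\<Sum>i<m. 1 / ps i x)"
    and \<omega>_A: "\<forall>i<m. A_weight (ps i) (\<omega> i)"
    and v_A: "A_weight p v"
    and \<phi>1_pos: "\<forall>i<m. pos_meas_fun (\<phi>1 i)"
    and \<phi>2_pos: "pos_meas_fun \<phi>2"
    and cond: "(SUP z\<in>UNIV \<times> {0<..}.
        (\<integral>\<^sup>+ t. indicator {snd z<..} t *
           (essinf_on {t<..} (\<lambda>\<eta>. \<Prod>i<m. ennreal (\<phi>1 i (fst z) \<eta>) * var_norm (ps i) (ball (fst z) \<eta>) (\<omega> i))
            / (\<Prod>i<m. var_norm (ps i) (ball (fst z) t) (\<omega> i))) / ennreal t \<partial>lborel)
        / ennreal (\<phi>2 (fst z) (snd z))) < \<infinity>"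
    and T_sub: "m_sublinear m (\<lambda>i. morrey_space (ps i) (\<phi>1 i) (\<omega> i)) T"
    and T_LS: "LS_class m (\<lambda>i. morrey_space (ps i) (\<phi>1 i) (\<omega> i)) T"
    and T_LB: "LB_class m (\<lambda>i. morrey_space (ps i) (\<phi>1 i) (\<omega> i))
                 (\<lambda>i. morrey_norm (ps i) (\<phi>1 i) (\<omega> i)) (morrey_norm p \<phi>2 v) T"
  shows "\<exists>C::real. \<forall>fs. in_prod m (\<lambda>i. morrey_space (ps i) (\<phi>1 i) (\<omega> i)) fs \<longrightarrow>
           morrey_norm p \<phi>2 v (T fs) \<le> ennreal C * (\<Prod>i<m. morrey_norm (ps i) (\<phi>1 i) (\<omega> i) (fs ! i))"
proof -
  let ?X = "\<lambda>i. morrey_space (ps i) (\<phi>1 i) (\<omega> i)"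
  obtain CS where LS: "\<forall>x r fs S. 0 < r \<and> in_prod m ?X fs \<and> S \<subseteq> {..<m} \<and> S \<noteq> {} \<longrightarrow>
      Linf_norm (ball x r) (T (trunc_list m S x r fs))
        \<le> ennreal CS * (\<Sum>j. \<Prod>i<m. ball_average x (2 ^ (j + 2) * r) (fs ! i))"
    using T_LS unfolding LS_class_def ball_average_def by blast
  obtain CB where LB: "\<forall>x r fs. 0 < r \<and> in_prod m ?X fs \<longrightarrow>
      morrey_norm p \<phi>2 v (T (trunc_list m {} x r fs)) \<le> ennreal CB * (\<Prod>i<m. morrey_norm (ps i) (\<phi>1 i) (\<omega> i) (fs ! i))"
    using T_LB unfolding LB_class_def by blast
  define Mc where "Mc = (SUP z\<in>UNIV \<times> {0<..}. tail_integral m ps \<phi>1 \<omega> (fst z) (snd z) / ennreal (\<phi>2 (fst z) (snd z)))"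
  have Mc: "Mc < top" using cond by (simp add: Mc_def tail_integral_def tail_ratio_def)
  have tail: "tail_integral m ps \<phi>1 \<omega> x r \<le> Mc * ennreal (\<phi>2 x r)" if "0 < r" for x r
  proof (rule ennreal_le_mult_of_divide_le)
    have "0 < \<phi>2 x r" using that \<phi>2_pos by (simp add: pos_meas_fun_def)
    then show "ennreal (\<phi>2 x r) \<noteq> 0" by simp
    show "tail_integral m ps \<phi>1 \<omega> x r / ennreal (\<phi>2 x r) \<le> Mc"
      unfolding Mc_def using that by (intro SUP_upper2[of "(x, r)"]) auto
  qed simp
  define C where "C = 4 * (ennreal CB + of_nat (card (Pow {..<m} - {{}})) * ennreal CS
      * (2 * (\<Prod>i<m. ennreal (2 ^ DIM('a)) * (2 * A_const (ps i) (\<omega> i))) * Mc))"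
  have "C < top"
    using Mc \<omega>_A of_nat_less_top prod_less_top_ennreal[of "{..<m}" "\<lambda>i. ennreal (2 ^ DIM('a)) * (2 * A_const (ps i) (\<omega> i))"]
    by (simp add: C_def ennreal_mult_less_top A_const_finite)
  moreover have "morrey_norm p \<phi>2 v (T fs) \<le> C * (\<Prod>i<m. morrey_norm (ps i) (\<phi>1 i) (\<omega> i) (fs ! i))"
    if "in_prod m ?X fs" for fs
    unfolding C_def using that LS LB
    by (intro morrey_norm_sublinear_le[OF p_P ps_P \<omega>_A v_A \<phi>1_pos \<phi>2_pos T_sub that _ _ tail Mc]) auto
  ultimately show ?thesis by (intro exI[of _ "enn2real C"]) simp
qed
end
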